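(* Let $\Gamma$ be a finitely generated group with exactly $2$ ends, and let $S$ be any finite generating set of $\Gamma$ not containing the identity. Then the Cayley graph $G=\mathrm{Cay}(\Gamma,S)$ has a periodic proper vertex-coloring with $\chi(G)$ colors.
   Context: The Cayley graph $\mathrm{Cay}(\Gamma,S)$ has vertex set $\Gamma$, with $g,h$ adjacent iff $hg^{-1}\in S\cup S^{-1}$. The number of ends of a finitely generated group is the number of ends of any of its Cayley graphs with respect to finite generating sets (ends: equivalence classes of rays, two rays being equivalent if there are infinitely many disjoint paths between them). $\chi(G)$ is the chromatic number. A vertex-coloring of $G$ is periodic if the subgroup of automorphisms of $G$ mapping every vertex to a vertex of the same color has finitely many orbits on $V(G)$. *)

theory Defs
  imports "HOL-Algebra.Algebra"
begin

definition is_path :: "'a set \<Rightarrow> ('a \<Rightarrow> 'a \<Rightarrow> bool) \<Rightarrow> 'a list \<Rightarrow> bool" where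
  "is_path V E p \<longleftrightarrow> p \<noteq> [] \<and> set p \<subseteq> V \<and> distinct p \<and>
     (\<forall>i. Suc i < length p \<longrightarrow> E (p ! i) (p ! Suc i))"

definition is_ray :: "'a set \<Rightarrow> ('a \<Rightarrow> 'a \<Rightarrow> bool) \<Rightarrow> (nat \<Rightarrow> 'a) \<Rightarrow> bool" where
  "is_ray V E r \<longleftrightarrow> inj r \<and> range r \<subseteq> V \<and> (\<forall>i. E (r i) (r (Suc i)))"

definition rays_equiv :: "'a set \<Rightarrow> ('a \<Rightarrow> 'a \<Rightarrow> bool) \<Rightarrow> (nat \<Rightarrow> 'a) \<Rightarrow> (nat \<Rightarrow> 'a) \<Rightarrow> bool" where
  "rays_equiv V E r1 r2 \<longleftrightarrow> (\<exists>P. infinite P \<and>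
     (\<forall>p\<in>P. is_path V E p \<and> hd p \<in> range r1 \<and> last p \<in> range r2) \<and>
     (\<forall>p\<in>P. \<forall>q\<in>P. p \<noteq> q \<longrightarrow> set p \<inter> set q = {}))"

definition graph_ends :: "'a set \<Rightarrow> ('a \<Rightarrow> 'a \<Rightarrow> bool) \<Rightarrow> (nat \<Rightarrow> 'a) set set" where
  "graph_ends V E = {{r'. is_ray V E r' \<and> rays_equiv V E r r'} | r. is_ray V E r}"

definition has_num_ends :: "'a set \<Rightarrow> ('a \<Rightarrow> 'a \<Rightarrow> bool) \<Rightarrow> nat \<Rightarrow> bool" where
  "has_num_ends V E k \<longleftrightarrow> finite (graph_ends V E) \<and> card (graph_ends V E) = k"

definition proper_coloring :: "'a set \<Rightarrow> ('a \<Rightarrow> 'a \<Rightarrow> bool) \<Rightarrow> ('a \<Rightarrow> nat) \<Rightarrow> bool" where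
  "proper_coloring V E c \<longleftrightarrow> (\<forall>u\<in>V. \<forall>v\<in>V. E u v \<longrightarrow> c u \<noteq> c v)"

definition chromatic_number :: "'a set \<Rightarrow> ('a \<Rightarrow> 'a \<Rightarrow> bool) \<Rightarrow> nat" where
  "chromatic_number V E = (LEAST k. \<exists>c. proper_coloring V E c \<and> c ` V \<subseteq> {..<k})"

definition graph_aut :: "'a set \<Rightarrow> ('a \<Rightarrow> 'a \<Rightarrow> bool) \<Rightarrow> ('a \<Rightarrow> 'a) \<Rightarrow> bool" where
  "graph_aut V E \<sigma> \<longleftrightarrow> bij_betw \<sigma> V V \<and> (\<forall>u\<in>V. \<forall>v\<in>V. E u v \<longleftrightarrow> E (\<sigma> u) (\<sigma> v))"

definition periodic_coloring :: "'a set \<Rightarrow> ('a \<Rightarrow> 'a \<Rightarrow> bool) \<Rightarrow> ('a \<Rightarrow> 'b) \<Rightarrow> bool" where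
  "periodic_coloring V E c \<longleftrightarrow>
     finite {{\<sigma> v | \<sigma>. graph_aut V E \<sigma> \<and> (\<forall>u\<in>V. c (\<sigma> u) = c u)} | v. v \<in> V}"

definition cayley_adj :: "('a, 'b) monoid_scheme \<Rightarrow> 'a set \<Rightarrow> 'a \<Rightarrow> 'a \<Rightarrow> bool" where
  "cayley_adj G S g h \<longleftrightarrow> g \<in> carrier G \<and> h \<in> carrier G \<and>
     h \<otimes>\<^bsub>G\<^esub> inv\<^bsub>G\<^esub> g \<in> S \<union> (\<lambda>s. inv\<^bsub>G\<^esub> s) ` S"

definition finite_gen_set :: "('a, 'b) monoid_scheme \<Rightarrow> 'a set \<Rightarrow> bool" where
  "finite_gen_set G S \<longleftrightarrow> S \<subseteq> carrier G \<and> finite S \<and> generate G S = carrier G"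

definition finitely_generated :: "('a, 'b) monoid_scheme \<Rightarrow> bool" where
  "finitely_generated G \<longleftrightarrow> (\<exists>S. finite_gen_set G S)"

text \<open>Number of ends of a f.g. group: number of ends of a Cayley graph w.r.t. a finite
  generating set (independent of the choice).\<close>
definition group_num_ends :: "('a, 'b) monoid_scheme \<Rightarrow> nat \<Rightarrow> bool" where
  "group_num_ends G k \<longleftrightarrow>
     (\<exists>S. finite_gen_set G S \<and> has_num_ends (carrier G) (cayley_adj G S) k)"

end

theory Submission
  imports Defs
begin

text \<open>
  Fix a finite generating set \<open>S0\<close> whose Cayley graph has two ends. A finite connected set \<open>F\<close>
  containing \<open>1\<close> separates two inequivalent rays, so it cuts the graph into infinite sides \<open>P\<close>
  and \<open>Q\<close> with no edge between them. If \<open>F x \<subseteq> P\<close>, the connected set \<open>F \<union> Q\<close> misses \<open>F x\<close>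
  and so lies on one side of the translated cut; combining two such translations yields \<open>a\<close>
  with \<open>(F \<union> P) a \<subseteq> P\<close>. The strip \<open>P \<inter> Q a\<close> is finite, for otherwise it would carry a ray
  giving a third end. Hence the sets \<open>(F \<union> P) a\<^sup>n\<close> are nested and define a height
  \<open>L : G \<rightarrow> \<int>\<close> with \<open>L (g a) = L g + 1\<close> and finite level sets.

  For an arbitrary finite \<open>S\<close>, the heights of adjacent vertices differ by less than some \<open>K\<close>.
  Given a coloring \<open>c\<close> with \<open>\<chi>\<close> colors, pigeonhole over the finitely many color patterns on
  slabs of height \<open>K\<close> gives \<open>n0\<close> and \<open>p \<ge> K\<close> with \<open>c (g a\<^sup>p) = c g\<close> whenever
  \<open>n0 \<le> L g < n0 + K\<close>. Repeating the colors of \<open>c\<close> on the heights \<open>[n0, n0 + p)\<close> with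
  period \<open>a\<^sup>p\<close> then gives a proper coloring with the same colors that is invariant under
  right multiplication by \<open>a\<^sup>p\<close>, so its color-preserving automorphisms have finitely many orbits.
\<close>

section \<open>Walks inside a vertex set\<close>

definition adj_within :: "('a \<Rightarrow> 'a \<Rightarrow> bool) \<Rightarrow> 'a set \<Rightarrow> 'a \<Rightarrow> 'a \<Rightarrow> bool" where
  "adj_within E Y x y \<longleftrightarrow> E x y \<and> x \<in> Y \<and> y \<in> Y"

definition connected_within :: "('a \<Rightarrow> 'a \<Rightarrow> bool) \<Rightarrow> 'a set \<Rightarrow> bool" where
  "connected_within E C \<longleftrightarrow> (\<forall>x\<in>C. \<forall>y\<in>C. (adj_within E C)\<^sup>*\<^sup>* x y)"

lemma walk_within_mono:
  assumes "(adj_within E Y)\<^sup>*\<^sup>* x y" "Y \<subseteq> Y'"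
  shows "(adj_within E Y')\<^sup>*\<^sup>* x y"
proof -
  have "adj_within E Y \<le> adj_within E Y'"
    using assms(2) by (auto simp: adj_within_def)
  then show ?thesis
    using assms(1) rtranclp_mono by (metis predicate2D)
qed

lemma walk_within_closed: "(adj_within E Y)\<^sup>*\<^sup>* x y \<Longrightarrow> x \<in> Y \<Longrightarrow> y \<in> Y"
  by (induction rule: rtranclp_induct) (auto simp: adj_within_def)

lemma walk_within_sym:
  assumes "symp E" "(adj_within E Y)\<^sup>*\<^sup>* x y"
  shows "(adj_within E Y)\<^sup>*\<^sup>* y x"
proof -
  have "symp (adj_within E Y)"
    using assms(1) by (auto simp: symp_def adj_within_def)
  then show ?thesis
    using assms(2) by (metis symp_rtranclp sympD)
qed

lemma is_path_take: "is_path V E p \<Longrightarrow> i < length p \<Longrightarrow> is_path V E (take (Suc i) p)"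
  unfolding is_path_def by (auto dest: in_set_takeD)

lemma is_path_snoc:
  assumes "is_path V E p" "z \<in> V" "z \<notin> set p" "E (last p) z"
  shows "is_path V E (p @ [z])"
  unfolding is_path_def
proof (intro conjI allI impI)
  fix j
  assume j: "Suc j < length (p @ [z])"
  show "E ((p @ [z]) ! j) ((p @ [z]) ! Suc j)"
  proof (cases "Suc j < length p")
    case True
    then show ?thesis
      using assms(1) by (auto simp: is_path_def nth_append)
  next
    case False
    then have "j = length p - 1" "p \<noteq> []"
      using j assms(1) by (auto simp: is_path_def)
    then show ?thesis
      using assms(4) j by (auto simp: nth_append last_conv_nth)
  qed
qed (use assms in \<open>auto simp: is_path_def\<close>)

lemma walk_within_imp_path:
  assumes "(adj_within E Y)\<^sup>*\<^sup>* x y" "x \<in> Y" "Y \<subseteq> V"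
  shows "\<exists>p. is_path V E p \<and> hd p = x \<and> last p = y \<and> set p \<subseteq> Y"
  using assms(1)
proof (induction rule: rtranclp_induct)
  case base
  then show ?case
    using assms by (auto simp: is_path_def intro!: exI[of _ "[x]"])
next
  case (step y z)
  then obtain p where p: "is_path V E p" "hd p = x" "last p = y" "set p \<subseteq> Y"
    by blast
  have z: "z \<in> Y" "E y z"
    using step(2) by (auto simp: adj_within_def)
  show ?case
  proof (cases "z \<in> set p")
    case True
    then obtain i where i: "i < length p" "p ! i = z"
      by (metis in_set_conv_nth)
    have "hd (take (Suc i) p) = x"
      using p(2) by (simp add: hd_take)
    moreover have "last (take (Suc i) p) = z"
      using i by (simp add: take_Suc_conv_app_nth)
    moreover have "set (take (Suc i) p) \<subseteq> Y"
      using p(4) set_take_subset[of "Suc i" p] by blast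
    ultimately show ?thesis
      using is_path_take[OF p(1) i(1)] by blast
  next
    case False
    then have "is_path V E (p @ [z])"
      using is_path_snoc[OF p(1)] z p(3) assms(3) by blast
    moreover have "p \<noteq> []"
      using p(1) by (simp add: is_path_def)
    ultimately show ?thesis
      using p z by (intro exI[of _ "p @ [z]"]) auto
  qed
qed

lemma walk_exits_into_boundary:
  assumes "E\<^sup>*\<^sup>* x y" "x \<in> P" "y \<notin> P" "\<And>u v. u \<in> P \<Longrightarrow> E u v \<Longrightarrow> v \<in> P \<union> B"
  shows "\<exists>b\<in>B. (adj_within E (P \<union> B))\<^sup>*\<^sup>* x b"
proof -
  have "(y \<in> P \<and> (adj_within E (P \<union> B))\<^sup>*\<^sup>* x y) \<or> (\<exists>b\<in>B. (adj_within E (P \<union> B))\<^sup>*\<^sup>* x b)"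
    using assms(1)
  proof (induction rule: rtranclp_induct)
    case base
    then show ?case
      using assms(2) by simp
  next
    case (step y z)
    then show ?case
    proof (elim disjE)
      assume y: "y \<in> P \<and> (adj_within E (P \<union> B))\<^sup>*\<^sup>* x y"
      then have z: "z \<in> P \<union> B"
        using assms(4) step(2) by blast
      then have "(adj_within E (P \<union> B))\<^sup>*\<^sup>* x z"
        using y step(2) by (metis UnI1 rtranclp.rtrancl_into_rtrancl adj_within_def)
      then show ?thesis
        using z by blast
    qed blast
  qed
  then show ?thesis
    using assms(3) by blast
qed

lemma connected_withinI:
  assumes "symp E" "h \<in> C" "\<And>c. c \<in> C \<Longrightarrow> (adj_within E C)\<^sup>*\<^sup>* h c"
  shows "connected_within E C"
  unfolding connected_within_def
  using assms walk_within_sym[OF assms(1)] by (meson rtranclp_trans)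

section \<open>Separations by a finite set\<close>

definition separation :: "'a set \<Rightarrow> ('a \<Rightarrow> 'a \<Rightarrow> bool) \<Rightarrow> 'a set \<Rightarrow> 'a set \<Rightarrow> 'a set \<Rightarrow> bool" where
  "separation V E F P Q \<longleftrightarrow> finite F \<and> F \<inter> P = {} \<and> F \<inter> Q = {} \<and> P \<inter> Q = {} \<and> F \<union> P \<union> Q = V \<and>
     (\<forall>u v. u \<in> P \<longrightarrow> E u v \<longrightarrow> v \<in> P \<union> F) \<and> (\<forall>u v. u \<in> Q \<longrightarrow> E u v \<longrightarrow> v \<in> Q \<union> F)"

lemma separationD:
  assumes "separation V E F P Q"
  shows "finite F" "F \<inter> P = {}" "F \<inter> Q = {}" "P \<inter> Q = {}" "F \<union> P \<union> Q = V"
    and "u \<in> P \<Longrightarrow> E u v \<Longrightarrow> v \<in> P \<union> F" "u \<in> Q \<Longrightarrow> E u v \<Longrightarrow> v \<in> Q \<union> F"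
  using assms unfolding separation_def by blast+

lemma separation_sym: "separation V E F P Q \<Longrightarrow> separation V E F Q P"
  unfolding separation_def by (metis Int_commute Un_commute Un_left_commute)

lemma separation_walk_within_stays:
  assumes "separation V E F P Q" "(adj_within E C)\<^sup>*\<^sup>* x y" "C \<inter> F = {}" "x \<in> P"
  shows "y \<in> P"
  using assms(2,4)
proof (induction rule: rtranclp_induct)
  case (step y z)
  then show ?case
    using separationD(6)[OF assms(1)] assms(3) unfolding adj_within_def by blast
qed

lemma separation_connected_side:
  assumes sep: "separation V E F P Q" and "connected_within E C" "C \<subseteq> V" "C \<inter> F = {}"
  shows "C \<subseteq> P \<or> C \<subseteq> Q"
proof (cases "C = {}")
  case False
  then obtain x where x: "x \<in> C"
    by blast
  have walk: "(adj_within E C)\<^sup>*\<^sup>* x c" if "c \<in> C" for c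
    using assms(2) x that unfolding connected_within_def by blast
  have "x \<in> P \<or> x \<in> Q"
    using x assms(3,4) separationD(5)[OF sep] by blast
  then show ?thesis
    using separation_walk_within_stays[OF sep walk] separation_walk_within_stays[OF separation_sym[OF sep] walk]
      assms(4) by blast
qed simp

lemma separation_path_meets_cut:
  assumes sep: "separation V E F P Q"
    and "p \<noteq> []" "\<forall>i. Suc i < length p \<longrightarrow> E (p ! i) (p ! Suc i)" "hd p \<in> P" "last p \<notin> P"
  shows "set p \<inter> F \<noteq> {}"
  using assms(2-5)
proof (induction p)
  case (Cons x p)
  show ?case
  proof (cases "p = []")
    case False
    have "E x (hd p)"
      using Cons.prems(2) False by (auto simp: hd_conv_nth)
    then have "hd p \<in> P \<union> F"
      using separationD(6)[OF sep] Cons.prems(3) by simp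
    moreover have "\<forall>i. Suc i < length p \<longrightarrow> E (p ! i) (p ! Suc i)"
      using Cons.prems(2) by (metis Suc_less_eq length_Cons nth_Cons_Suc)
    ultimately show ?thesis
      using Cons.IH Cons.prems(4) False by (auto dest: hd_in_set)
  qed (use Cons.prems in simp)
qed simp

lemma separation_rays_not_equiv:
  assumes sep: "separation V E F P Q" and "range r \<subseteq> P" "range r' \<subseteq> Q"
  shows "\<not> rays_equiv V E r r'"
proof
  assume "rays_equiv V E r r'"
  then obtain \<P> where \<P>: "infinite \<P>" "\<forall>p\<in>\<P>. is_path V E p \<and> hd p \<in> range r \<and> last p \<in> range r'"
    "\<forall>p\<in>\<P>. \<forall>q\<in>\<P>. p \<noteq> q \<longrightarrow> set p \<inter> set q = {}"
    unfolding rays_equiv_def by blast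
  have meets: "\<exists>x. x \<in> set p \<inter> F" if "p \<in> \<P>" for p
  proof -
    have "hd p \<in> P" "last p \<notin> P"
      using \<P>(2) that assms(2,3) separationD(4)[OF sep] by blast+
    then show ?thesis
      using separation_path_meets_cut[OF sep] \<P>(2) that unfolding is_path_def by blast
  qed
  define f where "f p = (SOME x. x \<in> set p \<inter> F)" for p
  have f: "f p \<in> set p \<inter> F" if "p \<in> \<P>" for p
    unfolding f_def using someI_ex[OF meets[OF that]] .
  have "inj_on f \<P>"
  proof (rule inj_onI)
    fix p q
    assume "p \<in> \<P>" "q \<in> \<P>" "f p = f q"
    then have "f p \<in> set p \<inter> set q"
      using f by (metis IntE IntI)
    then show "p = q"
      using \<P>(3) \<open>p \<in> \<P>\<close> \<open>q \<in> \<P>\<close> by blast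
  qed
  moreover have "f ` \<P> \<subseteq> F"
    using f by blast
  ultimately have "finite \<P>"
    using separationD(1)[OF sep] by (metis finite_imageD finite_subset)
  then show False
    using \<P>(1) by simp
qed

lemma separation_of_component:
  assumes "symp E" "\<And>u v. E u v \<Longrightarrow> u \<in> V \<and> v \<in> V" "finite F" "F \<subseteq> V" "x \<in> V - F"
  defines "A \<equiv> {y. (adj_within E (V - F))\<^sup>*\<^sup>* x y}"
  shows "separation V E F A (V - F - A)"
proof -
  have A_sub: "A \<subseteq> V - F"
    using walk_within_closed[of E "V - F" x] assms(5) unfolding A_def by blast
  have A_closed: "v \<in> A \<union> F" if "u \<in> A" "E u v" for u v
  proof (cases "v \<in> F")
    case False
    then have "adj_within E (V - F) u v"
      using that A_sub assms(2) by (auto simp: adj_within_def)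
    then show ?thesis
      using that(1) unfolding A_def by (simp add: rtranclp.rtrancl_into_rtrancl)
  qed simp
  have "v \<in> (V - F - A) \<union> F" if "u \<in> V - F - A" "E u v" for u v
    using A_closed[of v u] sympD[OF assms(1) that(2)] assms(2)[OF that(2)] that(1) by blast
  then show ?thesis
    unfolding separation_def
    by (intro conjI allI impI) (use assms(3,4) A_sub A_closed in blast)+
qed

lemma separation_complement_subset:
  assumes "separation V E F P Q" "separation V E F' P' Q'" "F \<union> Q \<subseteq> Q'"
  shows "F' \<union> P' \<subseteq> P"
  using separationD(2-5)[OF assms(1)] separationD(2-5)[OF assms(2)] assms(3) by blast

section \<open>Rays and ends\<close>

lemma ray_eventually_avoids:
  assumes "is_ray V E r" "finite F"
  shows "\<exists>N. \<forall>n\<ge>N. r n \<notin> F"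
proof -
  have fin: "finite (r -` F)"
    using assms by (intro finite_vimageI) (auto simp: is_ray_def)
  have "r n \<notin> F" if "Suc (Max (r -` F)) \<le> n" for n
    using Max_ge[OF fin, of n] that by auto
  then show ?thesis
    by blast
qed

lemma is_ray_shift: "is_ray V E r \<Longrightarrow> is_ray V E (\<lambda>n. r (n + N))"
  unfolding is_ray_def by (auto intro!: injI dest: injD)

lemma rays_equiv_refl:
  assumes "is_ray V E r"
  shows "rays_equiv V E r r"
proof -
  let ?\<P> = "range (\<lambda>n. [r n])"
  have "inj (\<lambda>n. [r n])"
    using assms by (auto simp: is_ray_def inj_def)
  then have "infinite ?\<P>"
    by (simp add: range_inj_infinite)
  moreover have "\<forall>p\<in>?\<P>. is_path V E p \<and> hd p \<in> range r \<and> last p \<in> range r"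
    using assms by (auto simp: is_ray_def is_path_def)
  ultimately show ?thesis
    unfolding rays_equiv_def by auto
qed

lemma rays_equivI_avoiding:
  assumes "\<And>F. finite F \<Longrightarrow> \<exists>p. is_path V E p \<and> hd p \<in> range r1 \<and> last p \<in> range r2 \<and> set p \<inter> F = {}"
  shows "rays_equiv V E r1 r2"
proof -
  define good where "good p \<longleftrightarrow> is_path V E p \<and> hd p \<in> range r1 \<and> last p \<in> range r2" for p
  define next_path where "next_path Ps = (SOME p. good p \<and> set p \<inter> \<Union>(set ` set Ps) = {})"
    for Ps :: "'a list list"
  define paths where "paths n = ((\<lambda>Ps. Ps @ [next_path Ps]) ^^ n) []" for n
  define P where "P n = next_path (paths n)" for n
  have paths_Suc: "paths (Suc n) = paths n @ [P n]" for n
    by (simp add: paths_def P_def)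
  have set_paths: "set (paths n) = P ` {..<n}" for n
    by (induction n) (auto simp: paths_Suc paths_def[of 0] lessThan_Suc)
  have P: "good (P n) \<and> set (P n) \<inter> \<Union>(set ` P ` {..<n}) = {}" for n
  proof -
    have "\<exists>p. good p \<and> set p \<inter> \<Union>(set ` set (paths n)) = {}"
      using assms[of "\<Union>(set ` set (paths n))"] unfolding good_def by auto
    then show ?thesis
      unfolding P_def next_path_def set_paths[symmetric] by (rule someI_ex)
  qed
  have disjoint_less: "set (P m) \<inter> set (P n) = {}" if "m < n" for m n
    using P[of n] that by auto
  have disjoint: "set (P m) \<inter> set (P n) = {}" if "m \<noteq> n" for m n
    using disjoint_less[of m n] disjoint_less[of n m] that by (metis Int_commute linorder_neqE_nat)
  have nonempty: "P n \<noteq> []" for n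
    using P[of n] by (simp add: good_def is_path_def)
  have "inj P"
  proof (rule injI)
    fix m n
    assume "P m = P n"
    then show "m = n"
      using disjoint[of m n] nonempty[of m] by (cases "m = n") auto
  qed
  then have "infinite (range P)"
    by (simp add: range_inj_infinite)
  moreover have "\<forall>p\<in>range P. \<forall>q\<in>range P. p \<noteq> q \<longrightarrow> set p \<inter> set q = {}"
    using disjoint by (metis imageE)
  moreover have "\<forall>p\<in>range P. is_path V E p \<and> hd p \<in> range r1 \<and> last p \<in> range r2"
    using P by (auto simp: good_def)
  ultimately show ?thesis
    unfolding rays_equiv_def by blast
qed

lemma inequivalent_rays_finite_cut:
  assumes "\<not> rays_equiv V E r1 r2"
  obtains F where "finite F"
    "\<forall>p. is_path V E p \<and> hd p \<in> range r1 \<and> last p \<in> range r2 \<longrightarrow> set p \<inter> F \<noteq> {}"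
proof -
  have "\<exists>F. finite F \<and> (\<forall>p. is_path V E p \<and> hd p \<in> range r1 \<and> last p \<in> range r2 \<longrightarrow> set p \<inter> F \<noteq> {})"
  proof (rule ccontr)
    assume no_cut: "\<not> ?thesis"
    have "rays_equiv V E r1 r2"
    proof (rule rays_equivI_avoiding)
      fix F :: "'a set"
      assume "finite F"
      then show "\<exists>p. is_path V E p \<and> hd p \<in> range r1 \<and> last p \<in> range r2 \<and> set p \<inter> F = {}"
        using no_cut by auto
    qed
    then show False
      using assms by contradiction
  qed
  then show thesis
    using that by blast
qed

lemma separation_between_rays:
  assumes "symp E" "\<And>u v. E u v \<Longrightarrow> u \<in> V \<and> v \<in> V" "finite F" "F \<subseteq> V"
    and \<alpha>: "is_ray V E \<alpha>" "range \<alpha> \<inter> F = {}" and \<beta>: "is_ray V E \<beta>" "range \<beta> \<inter> F = {}"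
    and cut: "\<forall>p. is_path V E p \<and> hd p \<in> range \<alpha> \<and> last p \<in> range \<beta> \<longrightarrow> set p \<inter> F \<noteq> {}"
  obtains P Q where "separation V E F P Q" "range \<alpha> \<subseteq> P" "range \<beta> \<subseteq> Q"
proof -
  have outside: "\<alpha> n \<in> V - F" "\<beta> n \<in> V - F" for n
    using \<alpha> \<beta> unfolding is_ray_def by blast+
  define A where "A = {y. (adj_within E (V - F))\<^sup>*\<^sup>* (\<alpha> 0) y}"
  have sep: "separation V E F A (V - F - A)"
    unfolding A_def by (rule separation_of_component[OF assms(1-4) outside(1)])
  have "\<alpha> n \<in> A" for n
  proof (induction n)
    case (Suc n)
    have "adj_within E (V - F) (\<alpha> n) (\<alpha> (Suc n))"
      using \<alpha>(1) outside(1) unfolding is_ray_def adj_within_def by blast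
    then show ?case
      using Suc.IH unfolding A_def by (simp add: rtranclp.rtrancl_into_rtrancl)
  qed (simp add: A_def)
  moreover have "\<beta> m \<notin> A" for m
  proof
    assume "\<beta> m \<in> A"
    then obtain p where p: "is_path V E p" "hd p = \<alpha> 0" "last p = \<beta> m" "set p \<subseteq> V - F"
      using walk_within_imp_path[of E "V - F" "\<alpha> 0" "\<beta> m" V] outside(1) unfolding A_def by blast
    then have "set p \<inter> F \<noteq> {}"
      using cut by auto
    then show False
      using p(4) by blast
  qed
  ultimately show thesis
    using that[OF sep] outside(2) by blast
qed

lemma two_ends_imp_inequivalent_rays:
  assumes "has_num_ends V E 2"
  obtains r1 r2 where "is_ray V E r1" "is_ray V E r2" "\<not> rays_equiv V E r1 r2"
proof (rule ccontr)
  assume "\<not> thesis"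
  with that have all_equiv: "rays_equiv V E r1 r2" if "is_ray V E r1" "is_ray V E r2" for r1 r2
    using that by blast
  have "graph_ends V E \<subseteq> {{r. is_ray V E r}}"
    unfolding graph_ends_def using all_equiv by blast
  then have "card (graph_ends V E) \<le> card {{r. is_ray V E r}}"
    by (intro card_mono) simp_all
  then show False
    using assms by (simp add: has_num_ends_def)
qed

lemma inequivalent_rays_not_two_ends:
  assumes "is_ray V E r1" "is_ray V E r2" "is_ray V E r3"
    "\<not> rays_equiv V E r1 r2" "\<not> rays_equiv V E r1 r3" "\<not> rays_equiv V E r2 r3"
  shows "\<not> has_num_ends V E 2"
proof
  assume two: "has_num_ends V E 2"
  define end_of where "end_of r = {r'. is_ray V E r' \<and> rays_equiv V E r r'}" for r
  have end_of_neq: "end_of r \<noteq> end_of r'" if "is_ray V E r'" "\<not> rays_equiv V E r r'" for r r'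
    using that rays_equiv_refl[of V E r'] unfolding end_of_def by blast
  have "{end_of r1, end_of r2, end_of r3} \<subseteq> graph_ends V E"
    using assms(1-3) unfolding graph_ends_def end_of_def by blast
  moreover have "card {end_of r1, end_of r2, end_of r3} = 3"
    using end_of_neq assms by simp
  ultimately have "3 \<le> card (graph_ends V E)"
    using two by (metis card_mono has_num_ends_def)
  then show False
    using two by (simp add: has_num_ends_def)
qed

lemma infinite_reach_step:
  assumes "\<And>v. finite {u. E v u}" "infinite {w. (adj_within E Y)\<^sup>*\<^sup>* v w}"
  shows "\<exists>u. E v u \<and> u \<in> Y - {v} \<and> infinite {w. (adj_within E (Y - {v}))\<^sup>*\<^sup>* u w}"
proof (rule ccontr)
  let ?N = "{u. E v u \<and> u \<in> Y - {v}}"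
  let ?reach = "\<lambda>u. {w. (adj_within E (Y - {v}))\<^sup>*\<^sup>* u w}"
  assume "\<not> ?thesis"
  moreover have "finite ?N"
    using assms(1)[of v] by (rule rev_finite_subset) auto
  ultimately have "finite (\<Union>u\<in>?N. ?reach u)"
    by auto
  moreover have "{w. (adj_within E Y)\<^sup>*\<^sup>* v w} \<subseteq> insert v (\<Union>u\<in>?N. ?reach u)"
  proof
    fix w
    assume "w \<in> {w. (adj_within E Y)\<^sup>*\<^sup>* v w}"
    then have "(adj_within E Y)\<^sup>*\<^sup>* v w"
      by simp
    then show "w \<in> insert v (\<Union>u\<in>?N. ?reach u)"
    proof (induction rule: rtranclp_induct)
      case (step w z)
      show ?case
      proof (cases "z = v \<or> w = v")
        case True
        then show ?thesis
          using step(2) by (auto simp: adj_within_def)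
      next
        case False
        then have "adj_within E (Y - {v}) w z"
          using step(2) by (auto simp: adj_within_def)
        then show ?thesis
          using step.IH False by (auto intro: rtranclp.rtrancl_into_rtrancl)
      qed
    qed simp
  qed
  ultimately show False
    using assms(2) by (meson finite_insert finite_subset)
qed

lemma ray_of_infinite_reach:
  assumes locfin: "\<And>v. finite {u. E v u}" and "Y \<subseteq> V" "v \<in> Y"
    and "infinite {w. (adj_within E Y)\<^sup>*\<^sup>* v w}"
  shows "\<exists>r. is_ray V E r \<and> range r \<subseteq> Y"
proof -
  define good where "good s \<longleftrightarrow> fst s \<in> snd s \<and> snd s \<subseteq> Y \<and>
      infinite {w. (adj_within E (snd s))\<^sup>*\<^sup>* (fst s) w}" for s
  define succ where "succ s s' \<longleftrightarrow> E (fst s) (fst s') \<and> snd s' = snd s - {fst s}" for s s'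
  have "good (v, Y)"
    using assms(3,4) unfolding good_def by simp
  moreover have "\<exists>s'. good s' \<and> succ s s'" if s: "good s" for s
  proof -
    obtain u where "E (fst s) u" "u \<in> snd s - {fst s}" "infinite {w. (adj_within E (snd s - {fst s}))\<^sup>*\<^sup>* u w}"
      using infinite_reach_step[of E "snd s" "fst s", OF locfin] s unfolding good_def by blast
    then have "good (u, snd s - {fst s}) \<and> succ s (u, snd s - {fst s})"
      using s unfolding good_def succ_def by auto
    then show ?thesis ..
  qed
  ultimately obtain s where s: "\<And>n. good (s n) \<and> succ (s n) (s (Suc n))"
    using dependent_nat_choice[where P="\<lambda>_. good" and Q="\<lambda>_. succ"] by blast
  define r where "r n = fst (s n)" for n
  have "snd (s n) \<inter> r ` {..<n} = {}" for n
  proof (induction n)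
    case (Suc n)
    have "snd (s (Suc n)) = snd (s n) - {r n}"
      using s[of n] by (simp add: succ_def r_def)
    then show ?case
      using Suc.IH by (auto simp: lessThan_Suc)
  qed simp
  moreover have "r n \<in> snd (s n)" for n
    using s[of n] by (simp add: good_def r_def)
  ultimately have "r m \<noteq> r n" if "m < n" for m n
    using that by (metis disjoint_iff image_eqI lessThan_iff)
  then have "inj r"
    by (metis linorder_injI)
  moreover have "range r \<subseteq> Y"
    using s unfolding good_def r_def by blast
  moreover have "E (r n) (r (Suc n))" for n
    using s[of n] by (simp add: succ_def r_def)
  ultimately show ?thesis
    using assms(2) unfolding is_ray_def by blast
qed

lemma ray_in_infinite_reachable_set:
  assumes locfin: "\<And>v. finite {u. E v u}" and "W \<union> B \<subseteq> V" "finite B" "infinite W"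
    and reach: "\<forall>w\<in>W. \<exists>b\<in>B. (adj_within E (W \<union> B))\<^sup>*\<^sup>* b w"
  shows "\<exists>r. is_ray V E r \<and> range r \<subseteq> W"
proof -
  have "\<exists>b\<in>B. infinite {w. (adj_within E (W \<union> B))\<^sup>*\<^sup>* b w}"
  proof (rule ccontr)
    assume "\<not> ?thesis"
    then have "finite (\<Union>b\<in>B. {w. (adj_within E (W \<union> B))\<^sup>*\<^sup>* b w})"
      using assms(3) by auto
    moreover have "W \<subseteq> (\<Union>b\<in>B. {w. (adj_within E (W \<union> B))\<^sup>*\<^sup>* b w})"
      using reach by blast
    ultimately show False
      using assms(4) finite_subset by blast
  qed
  then obtain b where "b \<in> B" "infinite {w. (adj_within E (W \<union> B))\<^sup>*\<^sup>* b w}"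
    by blast
  then obtain r where r: "is_ray V E r" "range r \<subseteq> W \<union> B"
    using ray_of_infinite_reach[of E "W \<union> B" V b] locfin assms(2) by blast
  obtain N where N: "\<forall>n\<ge>N. r n \<notin> B"
    using ray_eventually_avoids[OF r(1) assms(3)] by blast
  have "r (n + N) \<in> W" for n
    using N[rule_format, of "n + N"] r(2) by auto
  then have "range (\<lambda>n. r (n + N)) \<subseteq> W"
    by auto
  then show ?thesis
    using is_ray_shift[OF r(1)] by blast
qed

section \<open>Cayley graphs\<close>

lemma (in group) rcos_eq_preimage:
  assumes "M \<subseteq> carrier G" "b \<in> carrier G"
  shows "M #> b = {g \<in> carrier G. g \<otimes> inv b \<in> M}"
proof
  show "M #> b \<subseteq> {g \<in> carrier G. g \<otimes> inv b \<in> M}"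
    using assms by (auto simp: r_coset_def m_assoc)
  show "{g \<in> carrier G. g \<otimes> inv b \<in> M} \<subseteq> M #> b"
  proof
    fix g
    assume "g \<in> {g \<in> carrier G. g \<otimes> inv b \<in> M}"
    then have "g = (g \<otimes> inv b) \<otimes> b" "g \<otimes> inv b \<in> M"
      using assms(2) by (auto simp: m_assoc)
    then show "g \<in> M #> b"
      unfolding r_coset_def by blast
  qed
qed

lemma r_coset_Un: "(A \<union> B) #>\<^bsub>G\<^esub> b = (A #>\<^bsub>G\<^esub> b) \<union> (B #>\<^bsub>G\<^esub> b)"
  by (auto simp: r_coset_def)

lemma r_coset_mono: "A \<subseteq> B \<Longrightarrow> A #>\<^bsub>G\<^esub> b \<subseteq> B #>\<^bsub>G\<^esub> b"
  by (auto simp: r_coset_def)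

lemma (in group) mult_int_pow_mult:
  "g \<in> carrier G \<Longrightarrow> a \<in> carrier G \<Longrightarrow> g \<otimes> a [^] (i::int) \<otimes> a [^] (j::int) = g \<otimes> a [^] (i + j)"
  by (simp add: m_assoc int_pow_mult)

locale cayley_graph = group G for G (structure) +
  fixes S :: "'a set"
  assumes S_subset: "S \<subseteq> carrier G" and finite_S: "finite S"
begin

abbreviation adj :: "'a \<Rightarrow> 'a \<Rightarrow> bool" where
  "adj \<equiv> cayley_adj G S"

lemma adj_carrier: "adj g h \<Longrightarrow> g \<in> carrier G \<and> h \<in> carrier G"
  by (simp add: cayley_adj_def)

lemma adj_sym: "symp adj"
proof (rule sympI)
  fix g h
  assume "adj g h"
  then have g: "g \<in> carrier G" and h: "h \<in> carrier G" and s: "h \<otimes> inv g \<in> S \<union> (\<lambda>s. inv s) ` S"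
    by (auto simp: cayley_adj_def)
  have "inv (h \<otimes> inv g) \<in> S \<union> (\<lambda>s. inv s) ` S"
    using s S_subset by (auto simp: subset_iff)
  moreover have "g \<otimes> inv h = inv (h \<otimes> inv g)"
    using g h by (simp add: inv_mult_group)
  ultimately show "adj h g"
    using g h by (simp add: cayley_adj_def)
qed

lemma adj_mult_right_iff:
  assumes "x \<in> carrier G" "g \<in> carrier G" "h \<in> carrier G"
  shows "adj (g \<otimes> x) (h \<otimes> x) \<longleftrightarrow> adj g h"
proof -
  have "h \<otimes> x \<otimes> inv (g \<otimes> x) = h \<otimes> inv g"
    using assms by (simp add: inv_mult_group m_assoc[symmetric]) (simp add: m_assoc)
  then show ?thesis
    using assms by (simp add: cayley_adj_def)
qed

lemma adj_mult_right: "x \<in> carrier G \<Longrightarrow> adj g h \<Longrightarrow> adj (g \<otimes> x) (h \<otimes> x)"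
  using adj_mult_right_iff adj_carrier by blast

lemma finite_neighbours: "finite {h. adj g h}"
proof -
  have "{h. adj g h} \<subseteq> (\<lambda>s. s \<otimes> g) ` (S \<union> (\<lambda>s. inv s) ` S)"
  proof
    fix h
    assume "h \<in> {h. adj g h}"
    then have h: "g \<in> carrier G" "h \<in> carrier G" "h \<otimes> inv g \<in> S \<union> (\<lambda>s. inv s) ` S"
      by (auto simp: cayley_adj_def)
    then have "h = (h \<otimes> inv g) \<otimes> g"
      by (simp add: m_assoc)
    then show "h \<in> (\<lambda>s. s \<otimes> g) ` (S \<union> (\<lambda>s. inv s) ` S)"
      using h(3) by blast
  qed
  then show ?thesis
    using finite_S by (simp add: finite_subset)
qed

lemma adj_irrefl:
  assumes "\<one> \<notin> S"
  shows "\<not> adj g g"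
proof
  assume "adj g g"
  then have "\<one> \<in> S \<union> (\<lambda>s. inv s) ` S"
    by (auto simp: cayley_adj_def)
  then show False
    using assms S_subset inv_eq_1_iff by fastforce
qed

lemma graph_aut_mult_right:
  assumes b: "b \<in> carrier G"
  shows "graph_aut (carrier G) adj (\<lambda>x. x \<otimes> b)"
proof -
  have "bij_betw (\<lambda>x. x \<otimes> b) (carrier G) (carrier G)"
    by (rule bij_betwI[where g="\<lambda>x. x \<otimes> inv b"]) (use b in \<open>auto simp: m_assoc\<close>)
  then show ?thesis
    unfolding graph_aut_def using adj_mult_right_iff[OF b] by simp
qed

lemma is_ray_mult_right:
  assumes "is_ray (carrier G) adj r" "b \<in> carrier G"
  shows "is_ray (carrier G) adj (\<lambda>n. r n \<otimes> b)"
proof -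
  have r: "inj r" "range r \<subseteq> carrier G" "\<And>i. adj (r i) (r (Suc i))"
    using assms(1) unfolding is_ray_def by auto
  have "inj (\<lambda>n. r n \<otimes> b)"
  proof (rule injI)
    fix m n
    assume "r m \<otimes> b = r n \<otimes> b"
    then have "r m = r n"
      using r(2) assms(2) by (meson r_cancel range_subsetD)
    then show "m = n"
      using r(1) by (meson injD)
  qed
  then show ?thesis
    unfolding is_ray_def using r assms(2) adj_mult_right by auto
qed

lemma walk_within_mult_right:
  assumes "(adj_within adj C)\<^sup>*\<^sup>* x y" "b \<in> carrier G"
  shows "(adj_within adj (C #> b))\<^sup>*\<^sup>* (x \<otimes> b) (y \<otimes> b)"
  using assms(1)
proof (induction rule: rtranclp_induct)
  case (step y z)
  then have "adj_within adj (C #> b) (y \<otimes> b) (z \<otimes> b)"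
    using adj_mult_right[OF assms(2)] by (auto simp: adj_within_def r_coset_def)
  then show ?case
    by (rule rtranclp.rtrancl_into_rtrancl[OF step.IH])
qed simp

lemma connected_within_mult_right:
  assumes "connected_within adj C" "b \<in> carrier G"
  shows "connected_within adj (C #> b)"
  unfolding connected_within_def r_coset_def
  using assms walk_within_mult_right[OF _ assms(2), of C] unfolding connected_within_def r_coset_def
  by blast

lemma separation_mult_right:
  assumes sep: "separation (carrier G) adj F P Q" and b: "b \<in> carrier G"
  shows "separation (carrier G) adj (F #> b) (P #> b) (Q #> b)"
proof -
  have sub: "F \<subseteq> carrier G" "P \<subseteq> carrier G" "Q \<subseteq> carrier G"
    using separationD(5)[OF sep] by auto
  have pre: "M #> b = {g \<in> carrier G. g \<otimes> inv b \<in> M}" if "M \<subseteq> carrier G" for M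
    using rcos_eq_preimage[OF that b] .
  have closed: "v \<in> (M #> b) \<union> (F #> b)" if "u \<in> M #> b" "adj u v" and M: "M = P \<or> M = Q" for M u v
  proof -
    have M_sub: "M \<subseteq> carrier G"
      using M sub by blast
    have "adj (u \<otimes> inv b) (v \<otimes> inv b)"
      using adj_mult_right that(2) b by simp
    then have "v \<otimes> inv b \<in> M \<union> F"
      using that(1) M separationD(6,7)[OF sep] pre[OF M_sub] by blast
    then show ?thesis
      using adj_carrier[OF that(2)] pre[OF M_sub] pre[OF sub(1)] by blast
  qed
  have "finite (F #> b)"
    using separationD(1)[OF sep] by (simp add: r_coset_def)
  moreover have "(F #> b) \<inter> (P #> b) = {}" "(F #> b) \<inter> (Q #> b) = {}" "(P #> b) \<inter> (Q #> b) = {}"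
    using separationD(2-4)[OF sep] by (auto simp: pre sub)
  moreover have "(F #> b) \<union> (P #> b) \<union> (Q #> b) = carrier G"
    using separationD(5)[OF sep] b by (auto simp: pre sub)
  ultimately show ?thesis
    unfolding separation_def using closed by (metis Un_commute)
qed

lemma walk_drift:
  assumes b: "b \<in> carrier G" and drift: "\<And>u v. u \<in> M \<Longrightarrow> adj u v \<Longrightarrow> v \<otimes> b \<in> M"
    and "(adj ^^ k) g h" "g \<in> M" "g \<in> carrier G"
  shows "h \<otimes> b [^] k \<in> M"
  using assms(3)
proof (induction k arbitrary: h)
  case 0
  then show ?case
    using assms(4,5) by simp
next
  case (Suc k)
  then obtain y where y: "(adj ^^ k) g y" "adj y h"
    by (auto elim: relpowp_Suc_E)
  then have "adj (y \<otimes> b [^] k) (h \<otimes> b [^] k)"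
    using adj_mult_right b by simp
  then have "h \<otimes> b [^] k \<otimes> b \<in> M"
    using drift Suc.IH[OF y(1)] by blast
  then show ?case
    using adj_carrier[OF y(2)] b by (simp add: m_assoc)
qed

end

locale connected_cayley_graph = cayley_graph +
  assumes generate_S: "generate G S = carrier G"
begin

lemma walk_mult_right: "adj\<^sup>*\<^sup>* g h \<Longrightarrow> x \<in> carrier G \<Longrightarrow> adj\<^sup>*\<^sup>* (g \<otimes> x) (h \<otimes> x)"
  by (induction rule: rtranclp_induct) (auto intro: rtranclp.rtrancl_into_rtrancl adj_mult_right)

lemma walk_from_one:
  assumes "g \<in> carrier G"
  shows "adj\<^sup>*\<^sup>* \<one> g"
proof -
  have "g \<in> generate G S"
    using assms generate_S by simp
  then show ?thesis
  proof (induction rule: generate.induct)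
    case (incl h)
    then have "adj \<one> h"
      using S_subset by (auto simp: cayley_adj_def)
    then show ?case
      by simp
  next
    case (inv h)
    then have "adj \<one> (inv h)"
      using S_subset by (auto simp: cayley_adj_def)
    then show ?case
      by simp
  next
    case (eng h1 h2)
    have "h1 \<in> carrier G" "h2 \<in> carrier G"
      using eng.hyps generate_S by auto
    then have "adj\<^sup>*\<^sup>* h2 (h1 \<otimes> h2)"
      using walk_mult_right[OF eng.IH(1)] by simp
    then show ?case
      using eng.IH(2) by (meson rtranclp_trans)
  qed simp
qed

lemma walk_between:
  assumes "g \<in> carrier G" "h \<in> carrier G"
  shows "adj\<^sup>*\<^sup>* g h"
  using walk_from_one[OF assms(1)] walk_from_one[OF assms(2)] adj_sym
  by (metis rtranclp_trans symp_rtranclp sympD)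

definition ball :: "nat \<Rightarrow> 'a set" where
  "ball k = {g. \<exists>j\<le>k. (adj ^^ j) \<one> g}"

lemma ball_carrier: "ball k \<subseteq> carrier G"
proof -
  have "(adj ^^ j) \<one> g \<Longrightarrow> g \<in> carrier G" for j g
    by (induction j arbitrary: g) (auto elim!: relpowp_Suc_E dest: adj_carrier)
  then show ?thesis
    unfolding ball_def by blast
qed

lemma ball_mono: "k \<le> m \<Longrightarrow> ball k \<subseteq> ball m"
  unfolding ball_def using le_trans by blast

lemma one_in_ball: "\<one> \<in> ball k"
  unfolding ball_def by (intro CollectI exI[of _ 0]) simp

lemma finite_ball: "finite (ball k)"
proof (induction k)
  case 0
  have "ball 0 = {\<one>}"
    unfolding ball_def by auto
  then show ?case
    by simp
next
  case (Suc k)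
  have "ball (Suc k) \<subseteq> ball k \<union> (\<Union>y\<in>ball k. {z. adj y z})"
  proof
    fix z
    assume "z \<in> ball (Suc k)"
    then obtain j where j: "j \<le> Suc k" "(adj ^^ j) \<one> z"
      unfolding ball_def by blast
    show "z \<in> ball k \<union> (\<Union>y\<in>ball k. {z. adj y z})"
    proof (cases "j \<le> k")
      case True
      then show ?thesis
        using j unfolding ball_def by blast
    next
      case False
      then obtain y where "(adj ^^ k) \<one> y" "adj y z"
        using j by (auto elim: relpowp_Suc_E simp: le_Suc_eq)
      then show ?thesis
        unfolding ball_def by blast
    qed
  qed
  then show ?case
    using Suc.IH finite_neighbours by (simp add: finite_subset)
qed

lemma connected_ball: "connected_within adj (ball k)"
proof (rule connected_withinI[OF adj_sym one_in_ball])
  have "(adj_within adj (ball k))\<^sup>*\<^sup>* \<one> y" if "(adj ^^ j) \<one> y" "j \<le> k" for j y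
    using that
  proof (induction j arbitrary: y)
    case (Suc j)
    then obtain x where x: "(adj ^^ j) \<one> x" "adj x y"
      by (auto elim: relpowp_Suc_E)
    have "x \<in> ball k"
      using x(1) Suc.prems(2) unfolding ball_def by (intro CollectI exI[of _ j]) simp
    moreover have "y \<in> ball k"
      using Suc.prems unfolding ball_def by blast
    ultimately have "adj_within adj (ball k) x y"
      using x(2) by (simp add: adj_within_def)
    then show ?case
      using Suc.IH[OF x(1)] Suc.prems(2) by (auto intro: rtranclp.rtrancl_into_rtrancl)
  qed simp
  then show "(adj_within adj (ball k))\<^sup>*\<^sup>* \<one> y" if "y \<in> ball k" for y
    using that unfolding ball_def by blast
qed

lemma finite_subset_ball:
  assumes "finite F" "F \<subseteq> carrier G"
  shows "\<exists>k. F \<subseteq> ball k"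
  using assms
proof (induction F rule: finite_induct)
  case (insert x F)
  obtain k where k: "F \<subseteq> ball k"
    using insert by auto
  obtain m where "(adj ^^ m) \<one> x"
    using rtranclp_imp_relpowp[OF walk_from_one] insert.prems by blast
  then have "x \<in> ball (max k m)"
    unfolding ball_def using max.cobounded2 by blast
  moreover have "F \<subseteq> ball (max k m)"
    using k ball_mono[of k "max k m"] by simp
  ultimately show ?case
    by blast
qed simp

lemma connected_finite_superset:
  assumes "finite F0"
  obtains F where "finite F" "F0 \<inter> carrier G \<subseteq> F" "\<one> \<in> F" "F \<subseteq> carrier G" "connected_within adj F"
proof -
  obtain k where "F0 \<inter> carrier G \<subseteq> ball k"
    using finite_subset_ball[of "F0 \<inter> carrier G"] assms by blast
  then show thesis
    by (intro that[OF finite_ball _ one_in_ball ball_carrier connected_ball])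
qed

lemma connected_within_Un_side:
  assumes sep: "separation (carrier G) adj F P Q" and conn: "connected_within adj F" and "f \<in> F"
  shows "connected_within adj (F \<union> P)"
proof (rule connected_withinI[OF adj_sym])
  show "f \<in> F \<union> P"
    using assms(3) by simp
  have in_F: "(adj_within adj (F \<union> P))\<^sup>*\<^sup>* f c" if "c \<in> F" for c
    using conn assms(3) that walk_within_mono[of adj F f c "F \<union> P"] unfolding connected_within_def by blast
  show "(adj_within adj (F \<union> P))\<^sup>*\<^sup>* f c" if c: "c \<in> F \<union> P" for c
  proof (cases "c \<in> F")
    case False
    then have "c \<in> P" "c \<in> carrier G" "f \<notin> P" "f \<in> carrier G"
      using c assms(3) separationD(2,5)[OF sep] by blast+
    then obtain f' where "f' \<in> F" "(adj_within adj (P \<union> F))\<^sup>*\<^sup>* c f'"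
      using walk_exits_into_boundary[OF walk_between] separationD(6)[OF sep] by metis
    then show ?thesis
      using in_F walk_within_sym[OF adj_sym] by (metis Un_commute rtranclp_trans)
  qed (use in_F in blast)
qed

end

section \<open>Height functions\<close>

lemma downward_closed_boundary:
  fixes P :: "int \<Rightarrow> bool"
  assumes down: "\<And>n. P (n + 1) \<Longrightarrow> P n" and "P m" "\<not> P m'"
  shows "\<exists>!n. P n \<and> \<not> P (n + 1)"
proof -
  have below: "P k" if "P n" "k \<le> n" for k n
    using that(2)
  proof (induction k rule: int_le_induct)
    case (step i)
    then show ?case
      using down[of "i - 1"] by simp
  qed (rule that(1))
  have "\<exists>n. P n \<and> \<not> P (n + 1)"
  proof (rule ccontr)
    assume "\<nexists>n. P n \<and> \<not> P (n + 1)"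
    then have up: "P (n + 1)" if "P n" for n
      using that by blast
    have "\<not> m' \<le> m"
      using below[OF assms(2), of m'] assms(3) by blast
    then have "m \<le> m'"
      by simp
    then have "P m'"
    proof (induction m' rule: int_ge_induct)
      case (step i)
      then show ?case
        using up by blast
    qed (rule assms(2))
    then show False
      using assms(3) by blast
  qed
  moreover have "n = n'" if "P n" "\<not> P (n + 1)" "P n'" "\<not> P (n' + 1)" for n n'
    using below[OF that(1), of "n' + 1"] below[OF that(3), of "n + 1"] that(2,4) by linarith
  ultimately show ?thesis
    by blast
qed

text \<open>\<open>L g\<close> is the unique \<open>n\<close> with \<open>g \<in> U a\<^sup>n - U a\<^sup>n\<^sup>+\<^sup>1\<close>: the translates \<open>U a\<^sup>n\<close>
  decrease, and by the last two hypotheses they cover \<open>G\<close> and have empty intersection.\<close>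

lemma (in group) height_of_shift_invariant_set:
  assumes a: "a \<in> carrier G" and U: "U \<subseteq> carrier G" "U #> a \<subseteq> U"
    and above: "\<And>g. g \<in> carrier G \<Longrightarrow> \<exists>n::int. g \<otimes> a [^] n \<in> U"
    and below: "\<And>g. g \<in> carrier G \<Longrightarrow> \<exists>n::int. g \<otimes> a [^] n \<notin> U"
  shows "\<exists>L :: 'a \<Rightarrow> int. (\<forall>g\<in>carrier G. L (g \<otimes> a) = L g + 1) \<and> {g \<in> carrier G. L g = 0} = U - (U #> a)"
proof -
  define level where "level g n \<longleftrightarrow> g \<otimes> a [^] (- n) \<in> U" for g and n :: int
  have unique: "\<exists>!n. level g n \<and> \<not> level g (n + 1)" if g: "g \<in> carrier G" for g
  proof -
    obtain n m :: int where "g \<otimes> a [^] n \<in> U" "g \<otimes> a [^] m \<notin> U"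
      using above[OF g] below[OF g] by blast
    then have bounds: "level g (- n)" "\<not> level g (- m)"
      unfolding level_def by simp_all
    have down: "level g n" if "level g (n + 1)" for n
    proof -
      have "g \<otimes> a [^] (- (n + 1)) \<otimes> a \<in> U"
        using that U(2) g a unfolding level_def r_coset_def by blast
      then show ?thesis
        using mult_int_pow_mult[OF g a, of "- (n + 1)" 1] a unfolding level_def by simp
    qed
    show ?thesis
      by (rule downward_closed_boundary[of "level g", OF down bounds])
  qed
  define L where "L g = (THE n. level g n \<and> \<not> level g (n + 1))" for g
  have L: "L g = n \<longleftrightarrow> level g n \<and> \<not> level g (n + 1)" if "g \<in> carrier G" for g n
    using theI'[OF unique[OF that]] the1_equality[OF unique[OF that]] unfolding L_def by blast
  have level_mult: "level (g \<otimes> a) (n + 1) \<longleftrightarrow> level g n" if g: "g \<in> carrier G" for g n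
    using mult_int_pow_mult[OF g a, of 1 "- (n + 1)"] a unfolding level_def by (simp add: m_assoc)
  have "L (g \<otimes> a) = L g + 1" if g: "g \<in> carrier G" for g
    using L[OF g, of "L g"] L[of "g \<otimes> a" "L g + 1"] level_mult[OF g] level_mult[OF g, of "L g + 1"] g a
    by simp
  moreover have "{g \<in> carrier G. L g = 0} = U - (U #> a)"
  proof -
    have "L g = 0 \<longleftrightarrow> g \<in> U \<and> g \<otimes> inv a \<notin> U" if g: "g \<in> carrier G" for g
      using L[OF g, of 0] g a unfolding level_def by (simp add: int_pow_neg)
    moreover have "U - (U #> a) = {g \<in> carrier G. g \<in> U \<and> g \<otimes> inv a \<notin> U}"
      using rcos_eq_preimage[OF U(1) a] U(1) by blast
    ultimately show ?thesis
      by blast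
  qed
  ultimately show ?thesis
    by blast
qed

locale height_function = group G for G (structure) +
  fixes a :: 'a and L :: "'a \<Rightarrow> int"
  assumes a_carrier: "a \<in> carrier G"
    and height_mult: "g \<in> carrier G \<Longrightarrow> L (g \<otimes> a) = L g + 1"
    and finite_zero_level: "finite {g \<in> carrier G. L g = 0}"

context height_function
begin

abbreviation zero_level :: "'a set" where
  "zero_level \<equiv> {g \<in> carrier G. L g = 0}"

lemma height_mult_nat_pow: "g \<in> carrier G \<Longrightarrow> L (g \<otimes> a [^] (n::nat)) = L g + int n"
proof (induction n)
  case (Suc n)
  have "g \<otimes> a [^] Suc n = g \<otimes> a [^] n \<otimes> a"
    using Suc.prems a_carrier by (simp add: m_assoc)
  then show ?case
    using Suc height_mult[of "g \<otimes> a [^] n"] a_carrier by simp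
qed simp

lemma height_mult_pow:
  assumes g: "g \<in> carrier G"
  shows "L (g \<otimes> a [^] (n::int)) = L g + n"
proof (cases "n \<ge> 0")
  case True
  then show ?thesis
    using height_mult_nat_pow[OF g, of "nat n"] by (simp add: pow_nat)
next
  case False
  define k where "k = nat (- n)"
  have n: "n = - int k"
    using False unfolding k_def by simp
  have "g = g \<otimes> a [^] n \<otimes> a [^] int k"
    using mult_int_pow_mult[OF g a_carrier] g n by simp
  then have "L g = L (g \<otimes> a [^] n) + int k"
    using height_mult_nat_pow[of "g \<otimes> a [^] n" k] g a_carrier by (metis int_pow_closed int_pow_int m_closed)
  then show ?thesis
    using n by simp
qed

lemma zero_level_decomp:
  assumes g: "g \<in> carrier G"
  shows "g \<otimes> a [^] (- L g) \<in> zero_level" "g \<otimes> a [^] (- L g) \<otimes> a [^] L g = g"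
  using height_mult_pow[OF g] mult_int_pow_mult[OF g a_carrier, of "- L g" "L g"] g a_carrier by simp_all

lemma finite_height_interval: "finite {g \<in> carrier G. m \<le> L g \<and> L g < n}"
proof -
  have "{g \<in> carrier G. m \<le> L g \<and> L g < n} \<subseteq> (\<lambda>(d, t). d \<otimes> a [^] t) ` (zero_level \<times> {m..<n})"
  proof
    fix g
    assume "g \<in> {g \<in> carrier G. m \<le> L g \<and> L g < n}"
    then have "g \<in> carrier G" "L g \<in> {m..<n}"
      by auto
    then show "g \<in> (\<lambda>(d, t). d \<otimes> a [^] t) ` (zero_level \<times> {m..<n})"
      using zero_level_decomp by (auto intro!: image_eqI[of _ _ "(g \<otimes> a [^] (- L g), L g)"])
  qed
  then show ?thesis
    using finite_zero_level by (rule finite_subset[OF _ finite_imageI[OF finite_cartesian_product]]) simp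
qed

lemma exists_shift_into_period:
  assumes "0 < p" "g \<in> carrier G"
  shows "\<exists>q. n0 \<le> L (g \<otimes> a [^] (p * q)) \<and> L (g \<otimes> a [^] (p * q)) < n0 + p"
proof -
  have "L (g \<otimes> a [^] (p * - ((L g - n0) div p))) - n0 = (L g - n0) mod p"
    using height_mult_pow[OF assms(2)] by (simp add: minus_div_mult_eq_mod[symmetric] algebra_simps)
  then show ?thesis
    using assms(1) pos_mod_sign[of p "L g - n0"] pos_mod_bound[of p "L g - n0"]
    by (intro exI[of _ "- ((L g - n0) div p)"]) linarith
qed

end

section \<open>Two-ended Cayley graphs have height functions\<close>

context cayley_graph
begin

lemma separation_drift:
  assumes sep: "separation (carrier G) adj F P Q" and a: "a \<in> carrier G" and into: "(F \<union> P) #> a \<subseteq> P"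
  shows drift_up: "u \<in> F \<union> P \<Longrightarrow> adj u v \<Longrightarrow> v \<otimes> a \<in> F \<union> P"
    and drift_down: "u \<in> Q \<Longrightarrow> adj u v \<Longrightarrow> v \<otimes> inv a \<in> Q"
proof -
  show "v \<otimes> a \<in> F \<union> P" if "u \<in> F \<union> P" "adj u v"
  proof -
    have "u \<otimes> a \<in> P"
      using into that(1) unfolding r_coset_def by blast
    then show ?thesis
      using separationD(6)[OF sep _ adj_mult_right[OF a that(2)]] by blast
  qed
  show "v \<otimes> inv a \<in> Q" if "u \<in> Q" "adj u v"
  proof (rule ccontr)
    assume "v \<otimes> inv a \<notin> Q"
    moreover have v: "v \<in> carrier G"
      using adj_carrier[OF that(2)] by blast
    ultimately have "v \<otimes> inv a \<in> F \<union> P"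
      using separationD(5)[OF sep] a by blast
    then have "v \<in> P"
      using into rcos_eq_preimage[of "F \<union> P", OF _ a] separationD(5)[OF sep] v by blast
    then show False
      using separationD(7)[OF sep that] separationD(2,4)[OF sep] by blast
  qed
qed

lemma translate_into_side:
  assumes sep: "separation (carrier G) adj F P Q" and conn: "connected_within adj F"
    and one: "\<one> \<in> F" and inf: "infinite P"
  obtains x where "x \<in> P" "F #> x \<subseteq> P"
proof -
  have sub: "F \<subseteq> carrier G" "P \<subseteq> carrier G"
    using separationD(5)[OF sep] by auto
  \<comment> \<open>for \<open>x\<close> outside \<open>F\<inverse> F\<close> the translate \<open>F #> x\<close> misses \<open>F\<close>\<close>
  let ?bad = "(\<lambda>(f, f'). inv f \<otimes> f') ` (F \<times> F)"
  have "finite ?bad"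
    using separationD(1)[OF sep] by simp
  then obtain x where x: "x \<in> P" "x \<notin> ?bad"
    using inf by (metis finite_subset subsetI)
  have xc: "x \<in> carrier G"
    using x(1) sub by blast
  have "f \<otimes> x \<notin> F" if "f \<in> F" for f
  proof
    assume fx: "f \<otimes> x \<in> F"
    have "f \<in> carrier G"
      using that sub by blast
    then have "x = inv f \<otimes> (f \<otimes> x)"
      using xc by (simp add: m_assoc[symmetric])
    moreover have "(\<lambda>(f, f'). inv f \<otimes> f') (f, f \<otimes> x) \<in> ?bad"
      using that fx by (intro imageI) simp
    ultimately show False
      using x(2) by simp
  qed
  then have "(F #> x) \<inter> F = {}"
    by (auto simp: r_coset_def)
  then have "F #> x \<subseteq> P \<or> F #> x \<subseteq> Q"
    using separation_connected_side[OF sep connected_within_mult_right[OF conn xc]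
        r_coset_subset_G[OF sub(1) xc]] by blast
  moreover have "x \<in> F #> x"
    unfolding r_coset_def using one l_one[OF xc] by force
  ultimately show thesis
    using that x(1) separationD(4)[OF sep] by blast
qed

lemma shift_boundary_subset:
  assumes sep: "separation (carrier G) adj F P Q" and a: "a \<in> carrier G"
  shows "(F \<union> P) - ((F \<union> P) #> a) \<subseteq> F \<union> (P \<inter> (Q #> a))"
proof
  fix g
  assume g: "g \<in> (F \<union> P) - ((F \<union> P) #> a)"
  have sub: "F \<union> P \<subseteq> carrier G" "Q \<subseteq> carrier G"
    using separationD(5)[OF sep] by auto
  then have gc: "g \<in> carrier G" and "g \<otimes> inv a \<notin> F \<union> P"
    using g rcos_eq_preimage[OF sub(1) a] by blast+
  then have "g \<otimes> inv a \<in> Q"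
    using separationD(5)[OF sep] a by blast
  then show "g \<in> F \<union> (P \<inter> (Q #> a))"
    using g gc rcos_eq_preimage[OF sub(2) a] by blast
qed

end

context connected_cayley_graph
begin

lemma translation_into_side:
  assumes sep: "separation (carrier G) adj F P Q" and conn: "connected_within adj F"
    and one: "\<one> \<in> F" and inf: "infinite P"
  shows "\<exists>x\<in>carrier G. (F \<union> P) #> x \<subseteq> P \<or> (F \<union> Q) #> x \<subseteq> P"
proof -
  obtain x where x: "x \<in> P" "F #> x \<subseteq> P"
    by (rule translate_into_side[OF sep conn one inf])
  have xc: "x \<in> carrier G"
    using x(1) separationD(5)[OF sep] by blast
  have sepx: "separation (carrier G) adj (F #> x) (P #> x) (Q #> x)"
    using separation_mult_right[OF sep xc] .
  have "connected_within adj (F \<union> Q)"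
    using connected_within_Un_side[OF separation_sym[OF sep] conn one] .
  moreover have "(F \<union> Q) \<inter> (F #> x) = {}"
    using x(2) separationD(2,4)[OF sep] by blast
  ultimately have "F \<union> Q \<subseteq> P #> x \<or> F \<union> Q \<subseteq> Q #> x"
    using separation_connected_side[OF sepx] separationD(5)[OF sep] by blast
  then show ?thesis
  proof
    assume "F \<union> Q \<subseteq> P #> x"
    then have "(F #> x) \<union> (Q #> x) \<subseteq> P"
      using separation_complement_subset[OF sep separation_sym[OF sepx]] by blast
    then show ?thesis
      using xc by (auto simp: r_coset_Un)
  next
    assume "F \<union> Q \<subseteq> Q #> x"
    then have "(F #> x) \<union> (P #> x) \<subseteq> P"
      using separation_complement_subset[OF sep sepx] by blast
    then show ?thesis
      using xc by (auto simp: r_coset_Un)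
  qed
qed

lemma translation_into_some_side:
  assumes sep: "separation (carrier G) adj F P Q" and conn: "connected_within adj F"
    and one: "\<one> \<in> F" and "infinite P" "infinite Q"
  shows "\<exists>x\<in>carrier G. (F \<union> P) #> x \<subseteq> P \<or> (F \<union> Q) #> x \<subseteq> Q"
proof -
  obtain x where x: "x \<in> carrier G" "(F \<union> P) #> x \<subseteq> P \<or> (F \<union> Q) #> x \<subseteq> P"
    using translation_into_side[OF sep conn one assms(4)] by blast
  obtain y where y: "y \<in> carrier G" "(F \<union> Q) #> y \<subseteq> Q \<or> (F \<union> P) #> y \<subseteq> Q"
    using translation_into_side[OF separation_sym[OF sep] conn one assms(5)] by blast
  show ?thesis
  proof (cases "(F \<union> P) #> x \<subseteq> P \<or> (F \<union> Q) #> y \<subseteq> Q")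
    case True
    then show ?thesis
      using x(1) y(1) by blast
  next
    case False
    then have "(F \<union> Q) #> x \<subseteq> P" "(F \<union> P) #> y \<subseteq> Q"
      using x y by auto
    then have "((F \<union> Q) #> x) #> y \<subseteq> P #> y"
      by (simp add: r_coset_mono)
    also have "\<dots> \<subseteq> (F \<union> P) #> y"
      by (simp add: r_coset_mono)
    also have "\<dots> \<subseteq> Q"
      by fact
    finally have "((F \<union> Q) #> x) #> y \<subseteq> Q" .
    moreover have "((F \<union> Q) #> x) #> y = (F \<union> Q) #> (x \<otimes> y)"
      by (rule coset_mult_assoc) (use separationD(5)[OF sep] x(1) y(1) in auto)
    ultimately have "(F \<union> Q) #> (x \<otimes> y) \<subseteq> Q"
      by simp
    then show ?thesis
      using m_closed[OF x(1) y(1)] by blast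
  qed
qed

lemma ray_in_infinite_set_with_finite_boundary:
  assumes "infinite W" "finite B" "W \<union> B \<subseteq> carrier G" "\<And>u v. u \<in> W \<Longrightarrow> adj u v \<Longrightarrow> v \<in> W \<union> B"
    and "y \<in> carrier G - W"
  shows "\<exists>r. is_ray (carrier G) adj r \<and> range r \<subseteq> W"
proof (rule ray_in_infinite_reachable_set[OF finite_neighbours assms(3,2,1)])
  show "\<forall>w\<in>W. \<exists>b\<in>B. (adj_within adj (W \<union> B))\<^sup>*\<^sup>* b w"
  proof
    fix w
    assume w: "w \<in> W"
    have "adj\<^sup>*\<^sup>* w y"
      using walk_between w assms(3,5) by blast
    then obtain b where "b \<in> B" "(adj_within adj (W \<union> B))\<^sup>*\<^sup>* w b"
      using walk_exits_into_boundary[of adj w y W B] w assms(4,5) by blast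
    then show "\<exists>b\<in>B. (adj_within adj (W \<union> B))\<^sup>*\<^sup>* b w"
      using walk_within_sym[OF adj_sym] by blast
  qed
qed

text \<open>An infinite strip would contain a ray, separated from \<open>\<beta>\<close> by \<open>F\<close> and from the
  translate of \<open>\<alpha>\<close> by \<open>F #> a\<close>: a third end.\<close>

lemma finite_strip:
  assumes ends: "has_num_ends (carrier G) adj 2" and sep: "separation (carrier G) adj F P Q"
    and \<alpha>: "is_ray (carrier G) adj \<alpha>" "range \<alpha> \<subseteq> P"
    and \<beta>: "is_ray (carrier G) adj \<beta>" "range \<beta> \<subseteq> Q"
    and a: "a \<in> carrier G" and Pa: "P #> a \<subseteq> P"
  shows "finite (P \<inter> (Q #> a))"
proof (rule ccontr)
  let ?W = "P \<inter> (Q #> a)"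
  assume inf: "infinite ?W"
  have sepa: "separation (carrier G) adj (F #> a) (P #> a) (Q #> a)"
    using separation_mult_right[OF sep a] .
  have "?W \<union> (F \<union> (F #> a)) \<subseteq> carrier G"
    using separationD(5)[OF sep] separationD(5)[OF sepa] by blast
  moreover have "finite (F \<union> (F #> a))"
    using separationD(1)[OF sep] separationD(1)[OF sepa] by simp
  moreover have "v \<in> ?W \<union> (F \<union> (F #> a))" if "u \<in> ?W" "adj u v" for u v
    using separationD(6)[OF sep, of u v] separationD(7)[OF sepa, of u v] that by blast
  moreover have "\<beta> 0 \<in> carrier G - ?W"
    using \<beta>(2) separationD(4,5)[OF sep] by blast
  ultimately obtain \<rho> where \<rho>: "is_ray (carrier G) adj \<rho>" "range \<rho> \<subseteq> ?W"
    using ray_in_infinite_set_with_finite_boundary[OF inf] by blast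
  let ?\<alpha>' = "\<lambda>n. \<alpha> n \<otimes> a"
  have \<alpha>': "is_ray (carrier G) adj ?\<alpha>'" "range ?\<alpha>' \<subseteq> P #> a"
    using is_ray_mult_right[OF \<alpha>(1) a] \<alpha>(2) by (auto simp: r_coset_def)
  have "\<not> rays_equiv (carrier G) adj \<rho> ?\<alpha>'"
    by (rule separation_rays_not_equiv[OF separation_sym[OF sepa]]) (use \<rho>(2) \<alpha>'(2) in auto)
  moreover have "\<not> rays_equiv (carrier G) adj \<rho> \<beta>"
    by (rule separation_rays_not_equiv[OF sep]) (use \<rho>(2) \<beta>(2) in auto)
  moreover have "\<not> rays_equiv (carrier G) adj ?\<alpha>' \<beta>"
    by (rule separation_rays_not_equiv[OF sep]) (use \<alpha>'(2) Pa \<beta>(2) in auto)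
  ultimately show False
    using inequivalent_rays_not_two_ends[OF \<rho>(1) \<alpha>'(1) \<beta>(1)] ends by blast
qed

lemma reach_by_drift:
  assumes b: "b \<in> carrier G" and drift: "\<And>u v. u \<in> M \<Longrightarrow> adj u v \<Longrightarrow> v \<otimes> b \<in> M"
    and "m \<in> M" "m \<in> carrier G" "g \<in> carrier G"
  shows "\<exists>k::nat. g \<otimes> b [^] k \<in> M"
proof -
  obtain k where "(adj ^^ k) m g"
    using rtranclp_imp_relpowp[OF walk_between[OF assms(4,5)]] by blast
  then have "g \<otimes> b [^] k \<in> M"
    using walk_drift[of b M k m g] b drift assms(3,4) by blast
  then show ?thesis
    by blast
qed

lemma height_function_of_separation:
  assumes ends: "has_num_ends (carrier G) adj 2" and sep: "separation (carrier G) adj F P Q"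
    and one: "\<one> \<in> F"
    and \<alpha>: "is_ray (carrier G) adj \<alpha>" "range \<alpha> \<subseteq> P"
    and \<beta>: "is_ray (carrier G) adj \<beta>" "range \<beta> \<subseteq> Q"
    and a: "a \<in> carrier G" and into: "(F \<union> P) #> a \<subseteq> P"
  shows "\<exists>L. height_function G a L"
proof -
  have sub: "F \<union> P \<subseteq> carrier G" "Q \<subseteq> carrier G"
    using separationD(5)[OF sep] by auto
  have above: "\<exists>n::int. g \<otimes> a [^] n \<in> F \<union> P" if g: "g \<in> carrier G" for g
  proof -
    obtain k :: nat where "g \<otimes> a [^] k \<in> F \<union> P"
      using reach_by_drift[of a "F \<union> P" \<one> g] a drift_up[OF sep a into] one g by blast
    then show ?thesis
      by (metis int_pow_int)
  qed
  have below: "\<exists>n::int. g \<otimes> a [^] n \<notin> F \<union> P" if g: "g \<in> carrier G" for g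
  proof -
    have "\<beta> 0 \<in> Q" "\<beta> 0 \<in> carrier G"
      using \<beta>(2) sub(2) by blast+
    then obtain k :: nat where "g \<otimes> inv a [^] k \<in> Q"
      using reach_by_drift[of "inv a" Q "\<beta> 0" g] a drift_down[OF sep a into] g by blast
    then have "g \<otimes> a [^] (- int k) \<in> Q"
      using a by (simp add: int_pow_neg_int nat_pow_inv)
    then show ?thesis
      using separationD(3,4)[OF sep] by blast
  qed
  have "(F \<union> P) #> a \<subseteq> F \<union> P"
    using into by blast
  then obtain L :: "'a \<Rightarrow> int" where L: "\<forall>g\<in>carrier G. L (g \<otimes> a) = L g + 1"
    "{g \<in> carrier G. L g = 0} = (F \<union> P) - ((F \<union> P) #> a)"
    using height_of_shift_invariant_set[OF a sub(1) _ above below] by blast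
  have "P #> a \<subseteq> P"
    using r_coset_mono[of P "F \<union> P" G a] into by blast
  then have "finite (F \<union> (P \<inter> (Q #> a)))"
    using finite_strip[OF ends sep \<alpha> \<beta> a] separationD(1)[OF sep] by blast
  then have "finite {g \<in> carrier G. L g = 0}"
    using L(2) shift_boundary_subset[OF sep a] by (metis finite_subset)
  then have "height_function G a L"
    using is_group L(1) a by (simp add: height_function_def height_function_axioms_def)
  then show ?thesis
    by blast
qed

lemma two_ended_separation:
  assumes ends: "has_num_ends (carrier G) adj 2"
  obtains F P Q \<alpha> \<beta> where "separation (carrier G) adj F P Q" "connected_within adj F" "\<one> \<in> F"
    "is_ray (carrier G) adj \<alpha>" "range \<alpha> \<subseteq> P" "is_ray (carrier G) adj \<beta>" "range \<beta> \<subseteq> Q"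
proof -
  obtain r1 r2 where r: "is_ray (carrier G) adj r1" "is_ray (carrier G) adj r2"
    "\<not> rays_equiv (carrier G) adj r1 r2"
    by (rule two_ends_imp_inequivalent_rays[OF ends])
  obtain F0 where F0: "finite F0"
    "\<forall>p. is_path (carrier G) adj p \<and> hd p \<in> range r1 \<and> last p \<in> range r2 \<longrightarrow> set p \<inter> F0 \<noteq> {}"
    by (rule inequivalent_rays_finite_cut[OF r(3)])
  obtain F where F: "finite F" "F0 \<inter> carrier G \<subseteq> F" "\<one> \<in> F" "F \<subseteq> carrier G"
    "connected_within adj F"
    by (rule connected_finite_superset[OF F0(1)])
  obtain N1 N2 where N: "\<forall>n\<ge>N1. r1 n \<notin> F" "\<forall>n\<ge>N2. r2 n \<notin> F"
    using ray_eventually_avoids[OF r(1) F(1)] ray_eventually_avoids[OF r(2) F(1)] by blast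
  define \<alpha> where "\<alpha> n = r1 (n + N1)" for n
  define \<beta> where "\<beta> n = r2 (n + N2)" for n
  have rays: "is_ray (carrier G) adj \<alpha>" "is_ray (carrier G) adj \<beta>"
    unfolding \<alpha>_def \<beta>_def using is_ray_shift r(1,2) by blast+
  have avoid: "range \<alpha> \<inter> F = {}" "range \<beta> \<inter> F = {}"
    using N unfolding \<alpha>_def \<beta>_def by auto
  have cut: "\<forall>p. is_path (carrier G) adj p \<and> hd p \<in> range \<alpha> \<and> last p \<in> range \<beta> \<longrightarrow> set p \<inter> F \<noteq> {}"
  proof (intro allI impI)
    fix p
    assume p: "is_path (carrier G) adj p \<and> hd p \<in> range \<alpha> \<and> last p \<in> range \<beta>"
    then have "hd p \<in> range r1" "last p \<in> range r2"
      unfolding \<alpha>_def \<beta>_def by auto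
    then have "set p \<inter> F0 \<noteq> {}"
      using F0(2) p by blast
    moreover have "set p \<subseteq> carrier G"
      using p by (simp add: is_path_def)
    ultimately show "set p \<inter> F \<noteq> {}"
      using F(2) by blast
  qed
  obtain P Q where "separation (carrier G) adj F P Q" "range \<alpha> \<subseteq> P" "range \<beta> \<subseteq> Q"
    by (rule separation_between_rays[OF adj_sym adj_carrier F(1,4) rays(1) avoid(1) rays(2) avoid(2) cut])
  then show thesis
    using that F(3,5) rays by blast
qed

theorem two_ended_height_function:
  assumes ends: "has_num_ends (carrier G) adj 2"
  obtains a L where "height_function G a L"
proof -
  obtain F P Q \<alpha> \<beta> where sep: "separation (carrier G) adj F P Q" and conn: "connected_within adj F"
    and one: "\<one> \<in> F" and \<alpha>: "is_ray (carrier G) adj \<alpha>" "range \<alpha> \<subseteq> P"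
    and \<beta>: "is_ray (carrier G) adj \<beta>" "range \<beta> \<subseteq> Q"
    by (rule two_ended_separation[OF ends])
  have "infinite P" "infinite Q"
    using \<alpha> \<beta> unfolding is_ray_def by (meson finite_subset range_inj_infinite)+
  then obtain x where x: "x \<in> carrier G" "(F \<union> P) #> x \<subseteq> P \<or> (F \<union> Q) #> x \<subseteq> Q"
    using translation_into_some_side[OF sep conn one] by blast
  then show thesis
    using height_function_of_separation[OF ends sep one \<alpha> \<beta> x(1)]
      height_function_of_separation[OF ends separation_sym[OF sep] one \<beta> \<alpha> x(1)] that by blast
qed

end

section \<open>Periodic colorings\<close>

definition color_preserving_aut :: "'a set \<Rightarrow> ('a \<Rightarrow> 'a \<Rightarrow> bool) \<Rightarrow> ('a \<Rightarrow> 'b) \<Rightarrow> ('a \<Rightarrow> 'a) \<Rightarrow> bool" where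
  "color_preserving_aut V E c \<sigma> \<longleftrightarrow> graph_aut V E \<sigma> \<and> (\<forall>u\<in>V. c (\<sigma> u) = c u)"

lemma graph_aut_comp:
  assumes "graph_aut V E \<sigma>" "graph_aut V E \<tau>"
  shows "graph_aut V E (\<sigma> \<circ> \<tau>)"
proof -
  have "\<tau> u \<in> V" if "u \<in> V" for u
    using assms(2) that unfolding graph_aut_def bij_betw_def by blast
  moreover have "bij_betw (\<sigma> \<circ> \<tau>) V V"
    using assms unfolding graph_aut_def by (blast intro: bij_betw_trans)
  ultimately show ?thesis
    using assms unfolding graph_aut_def comp_def by blast
qed

lemma color_preserving_aut_comp:
  assumes "color_preserving_aut V E c \<sigma>" "color_preserving_aut V E c \<tau>"
  shows "color_preserving_aut V E c (\<sigma> \<circ> \<tau>)"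
proof -
  have "\<tau> u \<in> V" if "u \<in> V" for u
    using assms(2) that unfolding color_preserving_aut_def graph_aut_def bij_betw_def by blast
  then show ?thesis
    using assms graph_aut_comp unfolding color_preserving_aut_def by (metis comp_apply)
qed

lemma periodic_coloringI:
  assumes "finite R"
    and reps: "\<And>v. v \<in> V \<Longrightarrow> \<exists>\<sigma> \<tau>. color_preserving_aut V E c \<sigma> \<and> color_preserving_aut V E c \<tau> \<and>
      \<sigma> v \<in> R \<and> \<tau> (\<sigma> v) = v"
  shows "periodic_coloring V E c"
proof -
  define orbit where "orbit v = {\<sigma> v | \<sigma>. color_preserving_aut V E c \<sigma>}" for v
  have orbit_sub: "orbit (\<tau> v) \<subseteq> orbit v" if "color_preserving_aut V E c \<tau>" for \<tau> v
  proof
    fix y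
    assume "y \<in> orbit (\<tau> v)"
    then obtain \<sigma> where "color_preserving_aut V E c \<sigma>" "y = (\<sigma> \<circ> \<tau>) v"
      unfolding orbit_def by auto
    then show "y \<in> orbit v"
      unfolding orbit_def using color_preserving_aut_comp that by blast
  qed
  have "orbit v \<in> orbit ` R" if v: "v \<in> V" for v
  proof -
    obtain \<sigma> \<tau> where "color_preserving_aut V E c \<sigma>" "color_preserving_aut V E c \<tau>" "\<sigma> v \<in> R" "\<tau> (\<sigma> v) = v"
      using reps[OF v] by blast
    then have "orbit v = orbit (\<sigma> v)"
      using orbit_sub[of \<sigma> v] orbit_sub[of \<tau> "\<sigma> v"] by auto
    then show ?thesis
      using \<open>\<sigma> v \<in> R\<close> by blast
  qed
  then have "{orbit v | v. v \<in> V} \<subseteq> orbit ` R"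
    by blast
  then show ?thesis
    unfolding periodic_coloring_def orbit_def color_preserving_aut_def
    using assms(1) by (metis (no_types, lifting) finite_imageI finite_subset)
qed

context height_function
begin

text \<open>\<open>refold n0 p c\<close> repeats the colors that \<open>c\<close> takes on the heights \<open>[n0, n0 + p)\<close>
  with period \<open>a [^] p\<close>.\<close>

definition refold :: "int \<Rightarrow> int \<Rightarrow> ('a \<Rightarrow> 'c) \<Rightarrow> 'a \<Rightarrow> 'c" where
  "refold n0 p c g = c (g \<otimes> a [^] (- p * ((L g - n0) div p)))"

lemma refold_image: "c ` carrier G \<subseteq> B \<Longrightarrow> refold n0 p c ` carrier G \<subseteq> B"
  unfolding refold_def using a_carrier by auto

lemma refold_mult_pow:
  assumes p: "0 < p" and g: "g \<in> carrier G"
  shows "refold n0 p c (g \<otimes> a [^] (p * q)) = refold n0 p c g"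
proof -
  have "(L (g \<otimes> a [^] (p * q)) - n0) div p = ((L g - n0) + p * q) div p"
    using height_mult_pow[OF g] by (simp add: algebra_simps)
  also have "\<dots> = q + (L g - n0) div p"
    using p by simp
  finally have "g \<otimes> a [^] (p * q) \<otimes> a [^] (- p * ((L (g \<otimes> a [^] (p * q)) - n0) div p))
      = g \<otimes> a [^] (p * q + - p * (q + (L g - n0) div p))"
    using mult_int_pow_mult[OF g a_carrier] by simp
  also have "\<dots> = g \<otimes> a [^] (- p * ((L g - n0) div p))"
    by (simp add: algebra_simps)
  finally show ?thesis
    unfolding refold_def by simp
qed

lemma refold_eq:
  assumes K: "0 < K" "K \<le> p"
    and repeat: "\<forall>g\<in>carrier G. n0 \<le> L g \<longrightarrow> L g < n0 + K \<longrightarrow> c (g \<otimes> a [^] p) = c g"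
    and g: "g \<in> carrier G" "n0 \<le> L g" "L g < n0 + p + K"
  shows "refold n0 p c g = c g"
proof (cases "L g < n0 + p")
  case True
  then have "(L g - n0) div p = 0"
    using g(2) by simp
  then show ?thesis
    using g(1) unfolding refold_def by simp
next
  case False
  have "(L g - n0) div p = (L g - n0 - p + 1 * p) div p"
    by simp
  also have "\<dots> = 1"
    using False g(3) K by (subst div_mult_self1) simp_all
  finally have refold_g: "refold n0 p c g = c (g \<otimes> a [^] (- p))"
    unfolding refold_def by simp
  define g' where "g' = g \<otimes> a [^] (- p)"
  have "g' \<in> carrier G" "n0 \<le> L g'" "L g' < n0 + K"
    using height_mult_pow[OF g(1), of "- p"] False g a_carrier unfolding g'_def by simp_all
  then have "c (g' \<otimes> a [^] p) = c g'"
    using repeat by blast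
  moreover have "g' \<otimes> a [^] p = g"
    using mult_int_pow_mult[OF g(1) a_carrier, of "- p" p] g(1) unfolding g'_def by simp
  ultimately show ?thesis
    using refold_g unfolding g'_def by simp
qed

end

lemma mod_eq_close_imp_eq:
  fixes x y K :: int
  assumes "x mod K = y mod K" "\<bar>y - x\<bar> < K"
  shows "x = y"
proof (rule ccontr)
  assume "x \<noteq> y"
  moreover have "K dvd x - y"
    using assms(1) by (simp add: mod_eq_dvd_iff)
  ultimately have "\<bar>K\<bar> \<le> \<bar>x - y\<bar>"
    by (intro dvd_imp_le_int) simp_all
  then show False
    using assms(2) by (simp add: abs_minus_commute)
qed

locale cayley_height = cayley_graph G S + height_function G a L
  for G (structure) and S and a and L
begin

lemma adj_height_bound: "\<exists>K>0. \<forall>g h. adj g h \<longrightarrow> \<bar>L h - L g\<bar> < K"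
proof -
  define B where "B = (\<lambda>(s, d). \<bar>L (s \<otimes> d)\<bar>) ` ((S \<union> (\<lambda>s. inv s) ` S) \<times> zero_level)"
  have fin: "finite (insert 0 B)"
    unfolding B_def using finite_S finite_zero_level by simp
  have "\<bar>L h - L g\<bar> \<le> Max (insert 0 B)" if "adj g h" for g h
  proof -
    have g: "g \<in> carrier G" and h: "h \<in> carrier G" and s: "h \<otimes> inv g \<in> S \<union> (\<lambda>s. inv s) ` S"
      using that by (auto simp: cayley_adj_def)
    define d where "d = g \<otimes> a [^] (- L g)"
    have d: "d \<in> zero_level" "d \<otimes> a [^] L g = g"
      using zero_level_decomp[OF g] unfolding d_def by simp_all
    have "h = (h \<otimes> inv g) \<otimes> d \<otimes> a [^] L g"
      using g h d a_carrier by (simp add: m_assoc)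
    then have "L h - L g = L ((h \<otimes> inv g) \<otimes> d)"
      using height_mult_pow[of "(h \<otimes> inv g) \<otimes> d" "L g"] g h d by simp
    moreover have "\<bar>L ((h \<otimes> inv g) \<otimes> d)\<bar> \<in> insert 0 B"
      unfolding B_def using s d(1) by force
    ultimately show ?thesis
      using Max_ge[OF fin] by simp
  qed
  moreover have "0 \<le> Max (insert 0 B)"
    using Max_ge[OF fin] by simp
  ultimately show ?thesis
    by (intro exI[of _ "Max (insert 0 B) + 1"]) force
qed

lemma finite_proper_coloring:
  assumes "\<one> \<notin> S"
  shows "\<exists>k c. proper_coloring (carrier G) adj c \<and> c ` carrier G \<subseteq> {..<k}"
proof -
  obtain K where K: "K > 0" "\<And>g h. adj g h \<Longrightarrow> \<bar>L h - L g\<bar> < K"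
    using adj_height_bound by blast
  define T where "T = zero_level \<times> {0..<K}"
  have "finite T"
    using finite_zero_level by (simp add: T_def)
  then obtain f :: "'a \<times> int \<Rightarrow> nat" and k where f: "f ` T = {i. i < k}" "inj_on f T"
    using finite_imp_inj_to_nat_seg[of T] by auto
  define c where "c g = f (g \<otimes> a [^] (- L g), L g mod K)" for g
  have in_T: "(g \<otimes> a [^] (- L g), L g mod K) \<in> T" if "g \<in> carrier G" for g
    using zero_level_decomp(1)[OF that] K(1) by (simp add: T_def)
  have "c ` carrier G \<subseteq> {..<k}"
    using in_T f(1) unfolding c_def by blast
  moreover have "proper_coloring (carrier G) adj c"
    unfolding proper_coloring_def
  proof (intro ballI impI notI)
    fix g h
    assume g: "g \<in> carrier G" and h: "h \<in> carrier G" and e: "adj g h" and "c g = c h"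
    then have eq: "(g \<otimes> a [^] (- L g), L g mod K) = (h \<otimes> a [^] (- L h), L h mod K)"
      using f(2) in_T[OF g] in_T[OF h] unfolding c_def by (meson inj_onD)
    then have "L g mod K = L h mod K"
      by simp
    then have "L g = L h"
      using mod_eq_close_imp_eq K(2)[OF e] by blast
    then have "g = h"
      using eq zero_level_decomp(2)[OF g] zero_level_decomp(2)[OF h] by (metis prod.inject)
    then show False
      using e adj_irrefl[OF assms] by simp
  qed
  ultimately show ?thesis
    by blast
qed

lemma optimal_coloring:
  assumes "\<one> \<notin> S"
  obtains c where "proper_coloring (carrier G) adj c" "c ` carrier G \<subseteq> {..<chromatic_number (carrier G) adj}"
  using LeastI_ex[OF finite_proper_coloring[OF assms]] that unfolding chromatic_number_def by blast

lemma coloring_repeats_on_slab: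
  fixes c :: "'a \<Rightarrow> nat"
  assumes c: "c ` carrier G \<subseteq> {..<k}" and K: "K > 0"
  shows "\<exists>p n0. K \<le> p \<and> (\<forall>g\<in>carrier G. n0 \<le> L g \<longrightarrow> L g < n0 + K \<longrightarrow> c (g \<otimes> a [^] p) = c g)"
proof -
  \<comment> \<open>pigeonhole over the finitely many color patterns on the translates of one slab\<close>
  define slab where "slab = {g \<in> carrier G. 0 \<le> L g \<and> L g < K}"
  define pattern where "pattern m = restrict (\<lambda>g. c (g \<otimes> a [^] (int m * K))) slab" for m :: nat
  have "c (g \<otimes> a [^] i) \<in> {..<k}" if "g \<in> carrier G" for g and i :: int
    using c that a_carrier by (auto simp: image_subset_iff)
  then have "pattern m \<in> slab \<rightarrow>\<^sub>E {..<k}" for m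
    unfolding pattern_def restrict_PiE_iff slab_def by blast
  then have "range pattern \<subseteq> slab \<rightarrow>\<^sub>E {..<k}"
    by blast
  moreover have "finite (slab \<rightarrow>\<^sub>E {..<k})"
    using finite_height_interval unfolding slab_def by (intro finite_PiE) auto
  ultimately have "\<not> inj pattern"
    using finite_subset range_inj_infinite by blast
  then obtain m1 m2 where m: "m1 < m2" "pattern m1 = pattern m2"
    unfolding inj_def by (metis linorder_neqE_nat)
  have "K \<le> int (m2 - m1) * K"
    using mult_right_mono[of 1 "int (m2 - m1)" K] m(1) K by simp
  moreover have "c (g \<otimes> a [^] (int (m2 - m1) * K)) = c g"
    if g: "g \<in> carrier G" "int m1 * K \<le> L g" "L g < int m1 * K + K" for g
  proof -
    define g0 where "g0 = g \<otimes> a [^] (- (int m1 * K))"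
    have "g0 \<in> slab"
      using height_mult_pow[OF g(1)] g a_carrier unfolding g0_def slab_def by simp
    moreover have "pattern m1 g0 = pattern m2 g0"
      using m(2) by simp
    ultimately have "c (g0 \<otimes> a [^] (int m1 * K)) = c (g0 \<otimes> a [^] (int m2 * K))"
      unfolding pattern_def by simp
    moreover have "g0 \<otimes> a [^] (int m1 * K) = g"
      using mult_int_pow_mult[OF g(1) a_carrier] g(1) unfolding g0_def by simp
    moreover have "int m2 * K = int m1 * K + int (m2 - m1) * K"
      using m(1) by (simp add: of_nat_diff algebra_simps)
    then have "g0 \<otimes> a [^] (int m2 * K) = g \<otimes> a [^] (int (m2 - m1) * K)"
      using mult_int_pow_mult[OF g(1) a_carrier] unfolding g0_def by simp
    ultimately show ?thesis
      by simp
  qed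
  ultimately show ?thesis
    by blast
qed

lemma refold_proper:
  assumes proper: "proper_coloring (carrier G) adj c"
    and bound: "\<And>g h. adj g h \<Longrightarrow> \<bar>L h - L g\<bar> < K" and K: "0 < K" "K \<le> p"
    and repeat: "\<forall>g\<in>carrier G. n0 \<le> L g \<longrightarrow> L g < n0 + K \<longrightarrow> c (g \<otimes> a [^] p) = c g"
  shows "proper_coloring (carrier G) adj (refold n0 p c)"
proof -
  have p: "0 < p"
    using K by simp
  have neq: "refold n0 p c g \<noteq> refold n0 p c h" if e: "adj g h" and le: "L g \<le> L h" for g h
  proof -
    have g: "g \<in> carrier G" and h: "h \<in> carrier G"
      using adj_carrier[OF e] by blast+
    \<comment> \<open>after the shift, both ends of the edge lie where \<open>refold n0 p c\<close> agrees with \<open>c\<close>\<close>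
    obtain q where q: "n0 \<le> L (g \<otimes> a [^] (p * q))" "L (g \<otimes> a [^] (p * q)) < n0 + p"
      using exists_shift_into_period[OF p g] by blast
    define g' where "g' = g \<otimes> a [^] (p * q)"
    define h' where "h' = h \<otimes> a [^] (p * q)"
    have e': "adj g' h'"
      using adj_mult_right[OF _ e] a_carrier unfolding g'_def h'_def by simp
    have carrier: "g' \<in> carrier G" "h' \<in> carrier G"
      using g h a_carrier unfolding g'_def h'_def by simp_all
    have "L h' - L g' = L h - L g"
      using height_mult_pow[OF g] height_mult_pow[OF h] unfolding g'_def h'_def by simp
    then have "n0 \<le> L h'" "L h' < n0 + p + K"
      using q le bound[OF e] unfolding g'_def by linarith+
    then have "refold n0 p c h' = c h'"
      using refold_eq[OF K repeat carrier(2)] by blast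
    moreover have "refold n0 p c g' = c g'"
      using refold_eq[OF K repeat carrier(1)] q K(1) unfolding g'_def by simp
    moreover have "c g' \<noteq> c h'"
      using proper e' carrier unfolding proper_coloring_def by blast
    ultimately show ?thesis
      using refold_mult_pow[OF p g] refold_mult_pow[OF p h] unfolding g'_def h'_def by metis
  qed
  show ?thesis
    unfolding proper_coloring_def
    using neq sympD[OF adj_sym] by (metis linorder_le_cases)
qed

lemma periodic_coloring_of_shift_invariant:
  fixes p :: int
  assumes p: "0 < p" and invariant: "\<And>g q. g \<in> carrier G \<Longrightarrow> c (g \<otimes> a [^] (p * q)) = c g"
  shows "periodic_coloring (carrier G) adj c"
proof (rule periodic_coloringI[OF finite_height_interval[of 0 p]])
  fix v
  assume v: "v \<in> carrier G"
  have shift: "color_preserving_aut (carrier G) adj c (\<lambda>x. x \<otimes> a [^] (p * q))" for q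
    unfolding color_preserving_aut_def using graph_aut_mult_right a_carrier invariant by simp
  obtain q where q: "0 \<le> L (v \<otimes> a [^] (p * q))" "L (v \<otimes> a [^] (p * q)) < p"
    using exists_shift_into_period[OF p v, of 0] by auto
  define \<sigma> where "\<sigma> x = x \<otimes> a [^] (p * q)" for x
  define \<tau> where "\<tau> x = x \<otimes> a [^] (p * - q)" for x
  have "\<sigma> v \<in> {g \<in> carrier G. 0 \<le> L g \<and> L g < p}"
    using q v a_carrier unfolding \<sigma>_def by simp
  moreover have "\<tau> (\<sigma> v) = v"
    using mult_int_pow_mult[OF v a_carrier, of "p * q" "p * - q"] v unfolding \<sigma>_def \<tau>_def by simp
  moreover have "color_preserving_aut (carrier G) adj c \<sigma>" "color_preserving_aut (carrier G) adj c \<tau>"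
    unfolding \<sigma>_def \<tau>_def by (rule shift)+
  ultimately show "\<exists>\<sigma> \<tau>. color_preserving_aut (carrier G) adj c \<sigma> \<and> color_preserving_aut (carrier G) adj c \<tau> \<and>
      \<sigma> v \<in> {g \<in> carrier G. 0 \<le> L g \<and> L g < p} \<and> \<tau> (\<sigma> v) = v"
    by blast
qed

theorem exists_periodic_optimal_coloring:
  assumes "\<one> \<notin> S"
  shows "\<exists>c :: 'a \<Rightarrow> nat. proper_coloring (carrier G) adj c \<and>
    c ` carrier G \<subseteq> {..<chromatic_number (carrier G) adj} \<and> periodic_coloring (carrier G) adj c"
proof -
  obtain c where c: "proper_coloring (carrier G) adj c" "c ` carrier G \<subseteq> {..<chromatic_number (carrier G) adj}"
    by (rule optimal_coloring[OF assms])
  obtain K where K: "0 < K" "\<And>g h. adj g h \<Longrightarrow> \<bar>L h - L g\<bar> < K"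
    using adj_height_bound by blast
  obtain p n0 where p: "K \<le> p"
    and repeat: "\<forall>g\<in>carrier G. n0 \<le> L g \<longrightarrow> L g < n0 + K \<longrightarrow> c (g \<otimes> a [^] p) = c g"
    using coloring_repeats_on_slab[OF c(2) K(1)] by blast
  have p0: "0 < p"
    using K(1) p by simp
  have "proper_coloring (carrier G) adj (refold n0 p c)"
    using refold_proper[OF c(1) K(2) K(1) p repeat] .
  moreover have "refold n0 p c ` carrier G \<subseteq> {..<chromatic_number (carrier G) adj}"
    using refold_image[OF c(2)] .
  moreover have "periodic_coloring (carrier G) adj (refold n0 p c)"
    using p0 periodic_coloring_of_shift_invariant refold_mult_pow by blast
  ultimately show ?thesis
    by blast
qed

end

theorem theorem5p2:
  fixes G :: "('a, 'b) monoid_scheme" and S :: "'a set"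
  assumes "group G" and "finitely_generated G" and "group_num_ends G 2"
    and "finite_gen_set G S" and "\<one>\<^bsub>G\<^esub> \<notin> S"
  shows "\<exists>c :: 'a \<Rightarrow> nat.
           proper_coloring (carrier G) (cayley_adj G S) c \<and>
           c ` carrier G \<subseteq> {..<chromatic_number (carrier G) (cayley_adj G S)} \<and>
           periodic_coloring (carrier G) (cayley_adj G S) c"
proof -
  obtain S0 where S0: "finite_gen_set G S0" "has_num_ends (carrier G) (cayley_adj G S0) 2"
    using assms(3) unfolding group_num_ends_def by blast
  interpret two_ended: connected_cayley_graph G S0
    using assms(1) S0(1) unfolding finite_gen_set_def connected_cayley_graph_def
    by (simp add: cayley_graph_def cayley_graph_axioms_def connected_cayley_graph_axioms_def)
  obtain a L where "height_function G a L"
    using two_ended.two_ended_height_function[OF S0(2)] by blast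
  then interpret cayley_height G S a L
    using assms(4) unfolding finite_gen_set_def cayley_height_def
    by (simp add: cayley_graph_def cayley_graph_axioms_def height_function_def)
  show ?thesis
    using exists_periodic_optimal_coloring[OF assms(5)] .
qed

end
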